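(* Let $n\ge1$, $\beta\in\mathbb C\setminus\{0\}$, $1\le m\le n$ and $a_1,\dots,a_m,b_1,\dots,b_m,k,l\in\{1,\dots,n\}$. In $OY_\beta(\mathfrak{gl}_n)$, $$\left(u+\frac\beta u-v-\frac\beta v\right)[\tilde T_{kl}(u),\tilde t^{a_1\dots a_m}_{b_1\dots b_m}(v)]=\sum_{i=1}^m\tilde T_{a_il}(u)\,\tilde t^{a_1\dots k\dots a_m}_{b_1\dots b_m}(v)-\sum_{i=1}^m\tilde t^{a_1\dots a_m}_{b_1\dots l\dots b_m}(v)\,\tilde T_{kb_i}(u),$$ where in $\tilde t^{a_1\dots k\dots a_m}_{b_1\dots b_m}$ the index $a_i$ is replaced by $k$, and in $\tilde t^{a_1\dots a_m}_{b_1\dots l\dots b_m}$ the index $b_i$ is replaced by $l$.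
   Context: $OY_\beta(\mathfrak{gl}_n)$ is the unital associative $\mathbb C$-algebra with generators $\tilde t^{(r)}_{ij}$ ($r\ge1$) and relations $\left(u+\frac\beta u-v-\frac\beta v\right)[\tilde T_{ij}(u),\tilde T_{kl}(v)]=\tilde T_{kj}(u)\tilde T_{il}(v)-\tilde T_{kj}(v)\tilde T_{il}(u)$, $\tilde T_{ij}(u)=\delta_{ij}+\sum_{r\ge1}\tilde t^{(r)}_{ij}u^{-r}$. For $c\in\mathbb C$, $\phi_c(u)$ is the unique series in $u+\mathbb C[[u^{-1}]]$ with $\phi_c(u)+\beta/\phi_c(u)=u+\beta/u+c$, and $\tilde T_{ij}(\phi(u)):=\sum_r\tilde t^{(r)}_{ij}\phi(u)^{-r}$ expanded in $u^{-1}$. $\tilde T_p(v)=\sum_{i,j}1^{\otimes(p-1)}\otimes E_{ij}\otimes1^{\otimes(m-p)}\otimes\tilde T_{ij}(v)$, and $A_m$ is the antisymmetrizer on $(\mathbb C^n)^{\otimes m}$, $A_m(e_{i_1}\otimes\cdots\otimes e_{i_m})=\sum_{p\in S_m}\mathrm{sgn}(p)e_{i_{p(1)}}\otimes\cdots\otimes e_{i_{p(m)}}$. The quantum minors $\tilde t^{a_1\dots a_m}_{b_1\dots b_m}(u)$ are defined by $A_m\tilde T_1(u)\tilde T_2(\phi_{-1}(u))\cdots\tilde T_m(\phi_{-(m-1)}(u))=\sum_{a_i,b_j}E_{a_1b_1}\otimes\cdots\otimes E_{a_mb_m}\otimes\tilde t^{a_1\dots a_m}_{b_1\dots b_m}(u)$.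 *)

theory Defs
  imports "HOL-Computational_Algebra.Formal_Power_Series" "HOL-Combinatorics.Permutations"
begin

text \<open>A complex algebra is modelled as a ring 'a together with a unital ring
homomorphism sc from the complex numbers into the centre of 'a.\<close>

definition complex_alg :: "(complex \<Rightarrow> 'a::ring_1) \<Rightarrow> bool" where
  "complex_alg sc \<longleftrightarrow> sc 1 = 1 \<and> (\<forall>x y. sc (x + y) = sc x + sc y)
     \<and> (\<forall>x y. sc (x * y) = sc x * sc y) \<and> (\<forall>x a. sc x * a = a * sc x)"

text \<open>Coefficients of T_ij(u) in powers of u^{-1}; coefficient 0 is delta_ij.
  t r i j stands for the generator t^(r)_ij (only r >= 1 used).\<close>

definition Tc :: "(nat \<Rightarrow> nat \<Rightarrow> nat \<Rightarrow> 'a::ring_1) \<Rightarrow> nat \<Rightarrow> nat \<Rightarrow> nat \<Rightarrow> 'a" where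
  "Tc t r i j = (if r = 0 then (if i = j then 1 else 0) else t r i j)"

definition zext :: "(nat \<Rightarrow> nat \<Rightarrow> 'a::zero) \<Rightarrow> int \<Rightarrow> int \<Rightarrow> 'a" where
  "zext D r s = (if r < 0 \<or> s < 0 then 0 else D (nat r) (nat s))"

text \<open>Coefficient of u^{-r} v^{-s} in (u + beta/u - v - beta/v) X(u,v), where
  X has coefficients D (in powers u^{-1}, v^{-1}).\<close>
definition factor_coeff :: "(complex \<Rightarrow> 'a::ring_1) \<Rightarrow> complex \<Rightarrow> (nat \<Rightarrow> nat \<Rightarrow> 'a) \<Rightarrow> int \<Rightarrow> int \<Rightarrow> 'a" where
  "factor_coeff sc \<beta> D r s =
     zext D (r + 1) s + sc \<beta> * zext D (r - 1) s - zext D r (s + 1) - sc \<beta> * zext D r (s - 1)"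

definition commutator :: "'a::ring \<Rightarrow> 'a \<Rightarrow> 'a" where
  "commutator x y = x * y - y * x"

text \<open>Defining relations of OY_beta(gl_n), coefficientwise in u^{-1}, v^{-1}.\<close>
definition OY_rel :: "(complex \<Rightarrow> 'a::ring_1) \<Rightarrow> complex \<Rightarrow> nat \<Rightarrow> (nat \<Rightarrow> nat \<Rightarrow> nat \<Rightarrow> 'a) \<Rightarrow> bool" where
  "OY_rel sc \<beta> n t \<longleftrightarrow> (\<forall>i\<in>{1..n}. \<forall>j\<in>{1..n}. \<forall>k\<in>{1..n}. \<forall>l\<in>{1..n}. \<forall>r s :: int.
     factor_coeff sc \<beta> (\<lambda>p q. commutator (Tc t p i j) (Tc t q k l)) r s
     = zext (\<lambda>p q. Tc t p k j * Tc t q i l - Tc t q k j * Tc t p i l) r s)"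

text \<open>phi_c(u) = u + p(u^{-1}), p the unique power series with
  phi + beta/phi = u + beta/u + c (variable X stands for u^{-1}).\<close>
definition phi_tail :: "complex \<Rightarrow> complex \<Rightarrow> complex fps" where
  "phi_tail \<beta> c = (THE p. p + fps_const \<beta> * fps_X * inverse (1 + fps_X * p)
                         = fps_const \<beta> * fps_X + fps_const c)"

text \<open>phi_c(u)^{-1} as a power series in u^{-1}.\<close>
definition phi_inv :: "complex \<Rightarrow> complex \<Rightarrow> complex fps" where
  "phi_inv \<beta> c = fps_X * inverse (1 + fps_X * phi_tail \<beta> c)"

definition Tser :: "(nat \<Rightarrow> nat \<Rightarrow> nat \<Rightarrow> 'a::ring_1) \<Rightarrow> nat \<Rightarrow> nat \<Rightarrow> 'a fps" where
  "Tser t i j = Abs_fps (\<lambda>r. Tc t r i j)"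

text \<open>T_ij(phi_c(u)) = sum_r t^(r)_ij phi_c(u)^{-r}, expanded in u^{-1}
  (only r <= N contributes to the coefficient of u^{-N}).\<close>
definition Tphi :: "(complex \<Rightarrow> 'a::ring_1) \<Rightarrow> complex \<Rightarrow> (nat \<Rightarrow> nat \<Rightarrow> nat \<Rightarrow> 'a) \<Rightarrow> complex \<Rightarrow> nat \<Rightarrow> nat \<Rightarrow> 'a fps" where
  "Tphi sc \<beta> t c i j = Abs_fps (\<lambda>N. \<Sum>r\<le>N. Tc t r i j * sc (fps_nth (phi_inv \<beta> c ^ r) N))"

text \<open>Entry ((c_1..c_m),(a_1..a_m)) of the antisymmetrizer A_m:
  A_m(e_{a_1} x ... x e_{a_m}) = sum_p sgn p e_{a_{p(1)}} x ... x e_{a_{p(m)}}.\<close>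
definition antisym_entry :: "nat \<Rightarrow> (nat \<Rightarrow> nat) \<Rightarrow> (nat \<Rightarrow> nat) \<Rightarrow> int" where
  "antisym_entry m c a = (\<Sum>p\<in>{p. p permutes {1..m} \<and> (\<forall>i\<in>{1..m}. c i = a (p i))}. sign p)"

definition Tfac :: "(complex \<Rightarrow> 'a::ring_1) \<Rightarrow> complex \<Rightarrow> (nat \<Rightarrow> nat \<Rightarrow> nat \<Rightarrow> 'a) \<Rightarrow> nat \<Rightarrow> nat \<Rightarrow> nat \<Rightarrow> 'a fps" where
  "Tfac sc \<beta> t i a b = (if i = 1 then Tser t a b else Tphi sc \<beta> t (- of_nat (i - 1)) a b)"

definition qminor :: "(complex \<Rightarrow> 'a::ring_1) \<Rightarrow> complex \<Rightarrow> nat \<Rightarrow> (nat \<Rightarrow> nat \<Rightarrow> nat \<Rightarrow> 'a) \<Rightarrow> nat \<Rightarrow> (nat \<Rightarrow> nat) \<Rightarrow> (nat \<Rightarrow> nat) \<Rightarrow> 'a fps" where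
  "qminor sc \<beta> n t m c b =
     (\<Sum>a\<in>PiE {1..m} (\<lambda>_. {1..n}).
        fps_const (of_int (antisym_entry m c a)) * prod_list (map (\<lambda>i. Tfac sc \<beta> t i (a i) (b i)) [1..<m+1]))"

end

(*
  Multiply the OY relation through by u\<^sup>-\<^sup>1 v\<^sup>-\<^sup>1, so that everything is a power series in u\<^sup>-\<^sup>1
  and v\<^sup>-\<^sup>1; let e be the resulting scalar factor and \<delta> = u\<^sup>-\<^sup>1 v\<^sup>-\<^sup>1. Because
  \<phi>_c + \<beta>/\<phi>_c = v + \<beta>/v + c, substituting v \<mapsto> \<phi>_c(v) turns e into e - c \<delta>, and substituting
  u \<mapsto> \<phi>_c(w), v \<mapsto> \<phi>_(c-1)(w) turns the scalar factor into 1. The latter relation makes the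
  quantum minor, a row-antisymmetrised ordered product T_1(v) T_2(\<phi>_-1(v)) ... T_m(\<phi>_-(m-1)(v)),
  antisymmetric in its column indices too. By the former, T(u) satisfies the OY relation with
  the j-th factor of this product with scalar factor e + (j - 1) \<delta>. Moving T(u) through the
  product one factor at a time and antisymmetrising over rows, the terms in which T(u) exchanges
  an index with a factor telescope, and both sides become (e + \<delta>) (e + 2\<delta>) ... (e + (m - 1)\<delta>)
  times the two sides of the claimed identity. These factors are not zero divisors.
*)

theory Submission
  imports Defs
begin

unbundle fps_syntax

section \<open>Central elements and minors\<close>

definition central :: "'r::ring_1 \<Rightarrow> bool" where
  "central x \<longleftrightarrow> (\<forall>y. x * y = y * x)"

lemma central_commute: "central x \<Longrightarrow> x * y = y * x"
  by (simp add: central_def)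

lemma central_add: "central x \<Longrightarrow> central y \<Longrightarrow> central (x + y)"
  by (simp add: central_def algebra_simps)

lemma central_mult: "central x \<Longrightarrow> central y \<Longrightarrow> central (x * y)"
  unfolding central_def by (metis mult.assoc)

lemma central_uminus: "central x \<Longrightarrow> central (- x)"
  by (simp add: central_def)

lemma central_of_nat: "central (of_nat n)"
  by (simp add: central_def mult_of_nat_commute)

lemma central_mult_middle: "central c \<Longrightarrow> c * (P * X * S) = P * (c * X) * S"
  by (metis central_commute mult.assoc)

lemma central_diff_middle:
  "central c \<Longrightarrow> central c' \<Longrightarrow> c * (P * X * S) - c' * (P * Y * S) = P * (c * X - c' * Y) * S"
  by (simp add: central_mult_middle right_diff_distrib left_diff_distrib)

abbreviation \<tau> :: "nat \<Rightarrow> nat \<Rightarrow> nat \<Rightarrow> nat" where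
  "\<tau> i j \<equiv> Transposition.transpose i j"

definition seg_prod ::
    "(nat \<Rightarrow> nat \<Rightarrow> nat \<Rightarrow> 'r::ring_1) \<Rightarrow> nat \<Rightarrow> nat \<Rightarrow> (nat \<Rightarrow> nat) \<Rightarrow> (nat \<Rightarrow> nat) \<Rightarrow> 'r" where
  "seg_prod F lo hi r d = prod_list (map (\<lambda>i. F i (r i) (d i)) [lo..<Suc hi])"

lemma seg_prod_empty: "hi < lo \<Longrightarrow> seg_prod F lo hi r d = 1"
  by (simp add: seg_prod_def)

lemma seg_prod_Cons:
  "lo \<le> hi \<Longrightarrow> seg_prod F lo hi r d = F lo (r lo) (d lo) * seg_prod F (Suc lo) hi r d"
  unfolding seg_prod_def by (simp del: upt_Suc add: upt_conv_Cons)

lemma seg_prod_snoc: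
  "lo \<le> Suc hi \<Longrightarrow>
    seg_prod F lo (Suc hi) r d = seg_prod F lo hi r d * F (Suc hi) (r (Suc hi)) (d (Suc hi))"
  unfolding seg_prod_def using upt_Suc_append[of lo "Suc hi"] by (simp del: upt_Suc)

lemma seg_prod_split:
  "lo \<le> Suc mid \<Longrightarrow> mid \<le> hi \<Longrightarrow> seg_prod F lo hi r d = seg_prod F lo mid r d * seg_prod F (Suc mid) hi r d"
proof -
  assume h: "lo \<le> Suc mid" "mid \<le> hi"
  have "[lo..<Suc hi] = [lo..<Suc mid] @ [Suc mid..<Suc hi]"
    using upt_add_eq_append[of lo "Suc mid" "hi - mid"] h by simp
  then show ?thesis unfolding seg_prod_def by simp
qed

lemma seg_prod_cong:
  "(\<And>i. lo \<le> i \<Longrightarrow> i \<le> hi \<Longrightarrow> r i = r' i \<and> d i = d' i) \<Longrightarrow> seg_prod F lo hi r d = seg_prod F lo hi r' d'"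
  unfolding seg_prod_def by (intro arg_cong[where f=prod_list] map_cong) auto

lemma seg_prod_cong_factor:
  "(\<And>i. lo \<le> i \<Longrightarrow> i \<le> hi \<Longrightarrow> F i (r i) (d i) = F' i (r i) (d i)) \<Longrightarrow> seg_prod F lo hi r d = seg_prod F' lo hi r d"
  unfolding seg_prod_def by (intro arg_cong[where f=prod_list] map_cong) auto

definition minor :: "(nat \<Rightarrow> nat \<Rightarrow> nat \<Rightarrow> 'r::ring_1) \<Rightarrow> nat \<Rightarrow> (nat \<Rightarrow> nat) \<Rightarrow> (nat \<Rightarrow> nat) \<Rightarrow> 'r" where
  "minor F m r d = (\<Sum>\<sigma>\<in>{\<sigma>. \<sigma> permutes {1..m}}. of_int (sign \<sigma>) * seg_prod F 1 m (r \<circ> \<sigma>) d)"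

lemma permutes_interval_fixes_0:
  fixes m :: nat assumes "\<sigma> \<in> {\<sigma>. \<sigma> permutes {1..m}}" shows "\<sigma> 0 = 0"
  using assms permutes_not_in[of \<sigma> "{1..m}" 0] by simp

lemma permutes_interval_in:
  fixes m :: nat assumes "\<sigma> \<in> {\<sigma>. \<sigma> permutes {1..m}}" "i \<in> {1..m}" shows "\<sigma> i \<in> {1..m}"
  using assms permutes_in_image[of \<sigma> "{1..m}" i] by simp

lemma minor_cong:
  assumes "\<And>i. 1 \<le> i \<Longrightarrow> i \<le> m \<Longrightarrow> r i = r' i \<and> d i = d' i"
  shows "minor F m r d = minor F m r' d'"
  unfolding minor_def
proof (intro sum.cong refl arg_cong2[where f="(*)"] seg_prod_cong)
  fix \<sigma> i assume s: "\<sigma> \<in> {\<sigma>. \<sigma> permutes {1..m}}" and i: "1 \<le> i" "i \<le> m"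
  then have "\<sigma> i \<in> {1..m}" using permutes_interval_in[OF s, of i] by auto
  then show "(r \<circ> \<sigma>) i = (r' \<circ> \<sigma>) i \<and> d i = d' i" using assms i by auto
qed

lemma minor_cong_factor:
  assumes "\<And>j x. 1 \<le> j \<Longrightarrow> j \<le> m \<Longrightarrow> x \<in> c ` {1..m} \<Longrightarrow> F j x (d j) = F' j x (d j)"
  shows "minor F m c d = minor F' m c d"
  unfolding minor_def
proof (intro sum.cong refl arg_cong2[where f="(*)"] seg_prod_cong_factor)
  fix \<sigma> i assume s: "\<sigma> \<in> {\<sigma>. \<sigma> permutes {1..m}}" and i: "1 \<le> i" "i \<le> m"
  have "\<sigma> i \<in> {1..m}" using permutes_interval_in[OF s, of i] i by auto
  then show "F i ((c \<circ> \<sigma>) i) (d i) = F' i ((c \<circ> \<sigma>) i) (d i)" using assms i by auto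
qed

lemma sum_sign_compose_transpose:
  assumes "1 \<le> i" "i < i'" "i' \<le> m"
  shows "(\<Sum>\<sigma>\<in>{\<sigma>. \<sigma> permutes {1..m}}. of_int (sign \<sigma>) * G (\<sigma> \<circ> \<tau> i i'))
       = - (\<Sum>\<sigma>\<in>{\<sigma>. \<sigma> permutes {1..m}}. of_int (sign \<sigma>) * (G \<sigma> :: 'r::ring_1))"
proof -
  have tp: "\<tau> i i' permutes {1..m}" using assms by (intro permutes_swap_id) auto
  have "(\<Sum>\<sigma>\<in>{\<sigma>. \<sigma> permutes {1..m}}. of_int (sign \<sigma>) * G (\<sigma> \<circ> \<tau> i i'))
      = (\<Sum>\<sigma>\<in>{\<sigma>. \<sigma> permutes {1..m}}. of_int (sign (\<sigma> \<circ> \<tau> i i')) * G (\<sigma> \<circ> \<tau> i i' \<circ> \<tau> i i'))"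
    by (rule sum_permutations_compose_right[OF tp])
  also have "\<dots> = (\<Sum>\<sigma>\<in>{\<sigma>. \<sigma> permutes {1..m}}. - (of_int (sign \<sigma>) * G \<sigma>))"
  proof (rule sum.cong[OF refl])
    fix \<sigma> assume "\<sigma> \<in> {\<sigma>. \<sigma> permutes {1..m}}"
    then have "permutation \<sigma>" by (auto intro: permutes_imp_permutation)
    moreover have "permutation (\<tau> i i')" using tp by (auto intro: permutes_imp_permutation)
    ultimately have "sign (\<sigma> \<circ> \<tau> i i') = - sign \<sigma>"
      using assms by (simp add: sign_compose sign_swap_id)
    moreover have "\<sigma> \<circ> \<tau> i i' \<circ> \<tau> i i' = \<sigma>" by (simp add: comp_assoc)
    ultimately show "of_int (sign (\<sigma> \<circ> \<tau> i i')) * G (\<sigma> \<circ> \<tau> i i' \<circ> \<tau> i i') = - (of_int (sign \<sigma>) * G \<sigma>)"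
      by simp
  qed
  finally show ?thesis by (simp add: sum_negf)
qed

lemma diff_eqs_imp_add_eq:
  fixes A B C D p q :: "'r::ab_group_add"
  assumes "A - p = B - q" "C - q = D - p"
  shows "(B + D) - (A + C) = 0"
  using assms by (simp add: algebra_simps) (metis add.commute add_diff_cancel_left' add_diff_eq diff_add_eq)

lemma seg_prod_split_adjacent:
  assumes "1 \<le> j" "j < m"
  shows "seg_prod F 1 m r d = seg_prod F 1 (j - 1) r d
    * (F j (r j) (d j) * F (Suc j) (r (Suc j)) (d (Suc j))) * seg_prod F (Suc (Suc j)) m r d"
proof -
  have "seg_prod F 1 m r d = seg_prod F 1 (j - 1) r d * seg_prod F j m r d"
    using seg_prod_split[of 1 "j - 1" m F r d] assms by simp
  also have "seg_prod F j m r d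
      = F j (r j) (d j) * (F (Suc j) (r (Suc j)) (d (Suc j)) * seg_prod F (Suc (Suc j)) m r d)"
    using assms by (simp add: seg_prod_Cons)
  finally show ?thesis by (simp add: mult.assoc)
qed

text \<open>The hypothesis \<open>exchange\<close> is the OY relation between neighbouring factors of a quantum
  minor, whose scalar factor is \<open>1\<close>.\<close>

lemma minor_swap_adjacent:
  fixes F :: "nat \<Rightarrow> nat \<Rightarrow> nat \<Rightarrow> 'r::ring_1"
  assumes exchange: "\<And>x y z w. F j x y * F (Suc j) z w - F (Suc j) z w * F j x y
                              = F j z y * F (Suc j) x w - F (Suc j) z y * F j x w"
    and two: "\<And>x::'r. x + x = 0 \<Longrightarrow> x = 0"
    and j: "1 \<le> j" "j < m"
  shows "minor F m a (b \<circ> \<tau> j (Suc j)) = - minor F m a b"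
proof -
  let ?P = "{\<sigma>. \<sigma> permutes {1..m}}"
  let ?t = "\<tau> j (Suc j)"
  define H where "H = (\<lambda>\<sigma>. seg_prod F 1 m (a \<circ> \<sigma>) b + seg_prod F 1 m (a \<circ> \<sigma>) (b \<circ> ?t))"
  have H_swap: "H (\<sigma> \<circ> ?t) = H \<sigma>" for \<sigma>
  proof -
    let ?r = "a \<circ> \<sigma>" and ?r' = "a \<circ> (\<sigma> \<circ> ?t)" and ?d = "b \<circ> ?t"
    let ?x = "?r j" and ?z = "?r (Suc j)" and ?y = "b j" and ?w = "b (Suc j)"
    have P: "seg_prod F 1 (j - 1) ?r' b = seg_prod F 1 (j - 1) ?r b"
      "seg_prod F 1 (j - 1) ?r' ?d = seg_prod F 1 (j - 1) ?r b"
      "seg_prod F 1 (j - 1) ?r ?d = seg_prod F 1 (j - 1) ?r b"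
      by (rule seg_prod_cong; auto simp: transpose_def)+
    have S: "seg_prod F (Suc (Suc j)) m ?r' b = seg_prod F (Suc (Suc j)) m ?r b"
      "seg_prod F (Suc (Suc j)) m ?r' ?d = seg_prod F (Suc (Suc j)) m ?r b"
      "seg_prod F (Suc (Suc j)) m ?r ?d = seg_prod F (Suc (Suc j)) m ?r b"
      by (rule seg_prod_cong; auto simp: transpose_def)+
    have v: "?r' j = ?z" "?r' (Suc j) = ?x" "?d j = ?w" "?d (Suc j) = ?y"
      by (auto simp: transpose_def)
    let ?A = "seg_prod F 1 (j - 1) ?r b" and ?B = "seg_prod F (Suc (Suc j)) m ?r b"
    have "H (\<sigma> \<circ> ?t) - H \<sigma> = ?A * ((F j ?z ?y * F (Suc j) ?x ?w + F j ?z ?w * F (Suc j) ?x ?y)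
        - (F j ?x ?y * F (Suc j) ?z ?w + F j ?x ?w * F (Suc j) ?z ?y)) * ?B"
      unfolding H_def seg_prod_split_adjacent[OF j, of F] P S v
      by (simp only: distrib_left distrib_right left_diff_distrib right_diff_distrib)
    also have "(F j ?z ?y * F (Suc j) ?x ?w + F j ?z ?w * F (Suc j) ?x ?y)
        - (F j ?x ?y * F (Suc j) ?z ?w + F j ?x ?w * F (Suc j) ?z ?y) = 0"
      by (rule diff_eqs_imp_add_eq[OF exchange[of ?x ?y ?z ?w] exchange[of ?x ?w ?z ?y]])
    finally show ?thesis by (simp only: mult_zero_right mult_zero_left right_minus_eq)
  qed
  define S where "S = (\<Sum>\<sigma>\<in>?P. of_int (sign \<sigma>) * H \<sigma>)"
  have "S = - S"
    using sum_sign_compose_transpose[of j "Suc j" m H] j unfolding S_def H_swap by simp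
  then have "S = 0" using two[of S] by (simp add: eq_neg_iff_add_eq_0)
  moreover have "S = minor F m a b + minor F m a (b \<circ> ?t)"
    unfolding S_def H_def minor_def by (simp add: distrib_left sum.distrib)
  ultimately show ?thesis by (simp add: eq_neg_iff_add_eq_0 add.commute)
qed

lemma minor_swap:
  fixes F :: "nat \<Rightarrow> nat \<Rightarrow> nat \<Rightarrow> 'r::ring_1"
  assumes exchange: "\<And>j x y z w. 1 \<le> j \<Longrightarrow> j < m \<Longrightarrow>
      F j x y * F (Suc j) z w - F (Suc j) z w * F j x y = F j z y * F (Suc j) x w - F (Suc j) z y * F j x w"
    and two: "\<And>x::'r. x + x = 0 \<Longrightarrow> x = 0"
    and "1 \<le> i" "i < i'" "i' \<le> m"
  shows "minor F m a (b \<circ> \<tau> i i') = - minor F m a b"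
  using assms(3-)
proof (induction i' arbitrary: b)
  case 0
  then show ?case by simp
next
  case (Suc i'')
  have adj: "minor F m a (b \<circ> \<tau> j (Suc j)) = - minor F m a b" if "1 \<le> j" "j < m" for j b
    by (rule minor_swap_adjacent[OF exchange[OF that] two that])
  show ?case
  proof (cases "i = i''")
    case True
    then show ?thesis using adj[of i'' b] Suc.prems by (simp del: comp_apply)
  next
    case False
    then have h: "i < i''" using Suc.prems by simp
    let ?A = "\<tau> i'' (Suc i'')" and ?B = "\<tau> i i''"
    have "?A \<circ> ?B \<circ> ?A = \<tau> i (Suc i'')"
      using transpose_comp_triple[of "Suc i''" i i''] h by (simp add: transpose_commute)
    then have "b \<circ> \<tau> i (Suc i'') = ((b \<circ> ?A) \<circ> ?B) \<circ> ?A" by (simp add: comp_assoc)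
    then have "minor F m a (b \<circ> \<tau> i (Suc i'')) = - minor F m a ((b \<circ> ?A) \<circ> ?B)"
      using adj[of i'' "(b \<circ> ?A) \<circ> ?B"] Suc.prems h by (simp del: comp_apply)
    also have "minor F m a ((b \<circ> ?A) \<circ> ?B) = - minor F m a (b \<circ> ?A)"
      using Suc.IH[of "b \<circ> ?A"] Suc.prems h by (simp del: comp_apply)
    also have "minor F m a (b \<circ> ?A) = - minor F m a b"
      using adj[of i'' b] Suc.prems h by (simp del: comp_apply)
    finally show ?thesis by simp
  qed
qed

section \<open>Moving a generator through a minor\<close>

text \<open>A function \<open>N r d\<close> of a row index map \<open>r\<close> and a column
  index map \<open>d\<close> reads the indices of \<open>T\<close> at position 0 and those of the factor \<open>F j\<close> at
  position \<open>j\<close>. The relation \<open>T_F_relation\<close> is the OY relation between \<open>T(u)\<close> and the \<open>j\<close>-th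
  factor of a quantum minor, whose scalar factor is \<open>e_shift j\<close>.\<close>

locale minor_commutation =
  fixes e \<delta> :: "'r::ring_1" and T :: "nat \<Rightarrow> nat \<Rightarrow> 'r" and F :: "nat \<Rightarrow> nat \<Rightarrow> nat \<Rightarrow> 'r" and m :: nat
  assumes central_e: "central e" and central_\<delta>: "central \<delta>"
    and T_F_relation: "\<And>j k l x y. 1 \<le> j \<Longrightarrow> j \<le> m \<Longrightarrow>
      (e + of_nat (j - 1) * \<delta>) * (T k l * F j x y) - \<delta> * (T x l * F j k y)
      = (e + of_nat (j - 1) * \<delta>) * (F j x y * T k l) - \<delta> * (F j x l * T k y)"
begin

definition e_shift :: "nat \<Rightarrow> 'r" where
  "e_shift i = e + of_nat (i - 1) * \<delta>"

lemma central_e_shift: "central (e_shift i)"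
  unfolding e_shift_def by (intro central_add central_mult central_e central_\<delta> central_of_nat)

fun e_shift_prod :: "nat \<Rightarrow> 'r" where
  "e_shift_prod 0 = 1"
| "e_shift_prod (Suc 0) = 1"
| "e_shift_prod (Suc (Suc j)) = e_shift_prod (Suc j) * e_shift (Suc (Suc j))"

definition Tword :: "nat \<Rightarrow> (nat \<Rightarrow> nat) \<Rightarrow> (nat \<Rightarrow> nat) \<Rightarrow> 'r" where
  "Tword j r d = seg_prod F 1 j r d * T (r 0) (d 0) * seg_prod F (Suc j) m r d"

definition row_step :: "nat \<Rightarrow> ((nat \<Rightarrow> nat) \<Rightarrow> (nat \<Rightarrow> nat) \<Rightarrow> 'r) \<Rightarrow> (nat \<Rightarrow> nat) \<Rightarrow> (nat \<Rightarrow> nat) \<Rightarrow> 'r" where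
  "row_step j N = (\<lambda>r d. e_shift j * N r d - \<delta> * N (r \<circ> \<tau> 0 j) d)"

definition col_step :: "nat \<Rightarrow> ((nat \<Rightarrow> nat) \<Rightarrow> (nat \<Rightarrow> nat) \<Rightarrow> 'r) \<Rightarrow> (nat \<Rightarrow> nat) \<Rightarrow> (nat \<Rightarrow> nat) \<Rightarrow> 'r" where
  "col_step j N = (\<lambda>r d. e_shift j * N r d - \<delta> * N r (d \<circ> \<tau> 0 j))"

primrec row_steps where
  "row_steps 0 N = N"
| "row_steps (Suc j) N = row_step (Suc j) (row_steps j N)"

primrec col_steps where
  "col_steps 0 N = N"
| "col_steps (Suc j) N = col_steps j (col_step (Suc j) N)"

lemma row_step_col_step_commute: "row_step j (col_step i N) = col_step i (row_step j N)"
proof -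
  have "e_shift j * (e_shift i * a - \<delta> * b) - \<delta> * (e_shift i * c - \<delta> * d') =
      e_shift i * (e_shift j * a - \<delta> * c) - \<delta> * (e_shift j * b - \<delta> * d')" for a b c d'
  proof -
    have "e_shift j * e_shift i = e_shift i * e_shift j" "e_shift j * \<delta> = \<delta> * e_shift j"
      "e_shift i * \<delta> = \<delta> * e_shift i"
      using central_commute[OF central_e_shift, of j "e_shift i"] central_commute[OF central_e_shift, of j \<delta>]
        central_commute[OF central_e_shift, of i \<delta>] by auto
    then have "e_shift j * (e_shift i * a) = e_shift i * (e_shift j * a)"
      "e_shift j * (\<delta> * b) = \<delta> * (e_shift j * b)" "\<delta> * (e_shift i * c) = e_shift i * (\<delta> * c)"
      by (simp_all add: mult.assoc[symmetric])
    then show ?thesis by (simp add: right_diff_distrib)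
  qed
  then show ?thesis unfolding row_step_def col_step_def by (simp add: comp_def)
qed

lemma row_step_col_steps_commute: "row_step j (col_steps i N) = col_steps i (row_step j N)"
  by (induction i arbitrary: N) (simp_all add: row_step_col_step_commute)

lemma row_step_Tword:
  assumes "1 \<le> j" "j \<le> m"
  shows "row_step j (Tword (j - 1)) = col_step j (Tword j)"
proof (intro ext)
  fix r d
  let ?P = "seg_prod F 1 (j - 1) r d" and ?S = "seg_prod F (Suc j) m r d"
  have swapped: "(r \<circ> \<tau> 0 j) 0 = r j" "(d \<circ> \<tau> 0 j) 0 = d j" "(r \<circ> \<tau> 0 j) j = r 0" "(d \<circ> \<tau> 0 j) j = d 0"
    by (auto simp: transpose_def)
  have P: "seg_prod F 1 (j - 1) (r \<circ> \<tau> 0 j) d = ?P" "seg_prod F 1 (j - 1) r (d \<circ> \<tau> 0 j) = ?P"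
    by (rule seg_prod_cong; auto simp: transpose_def)+
  have S: "seg_prod F (Suc j) m (r \<circ> \<tau> 0 j) d = ?S" "seg_prod F (Suc j) m r (d \<circ> \<tau> 0 j) = ?S"
    by (rule seg_prod_cong; auto simp: transpose_def)+
  have before: "Tword (j - 1) r' d'
      = seg_prod F 1 (j - 1) r' d' * (T (r' 0) (d' 0) * F j (r' j) (d' j)) * seg_prod F (Suc j) m r' d'"
    for r' d'
    using assms by (simp add: Tword_def seg_prod_Cons mult.assoc)
  have after: "Tword j r' d'
      = seg_prod F 1 (j - 1) r' d' * (F j (r' j) (d' j) * T (r' 0) (d' 0)) * seg_prod F (Suc j) m r' d'"
    for r' d'
    using assms seg_prod_snoc[of 1 "j - 1" F r' d'] by (simp add: Tword_def mult.assoc)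
  have "row_step j (Tword (j - 1)) r d
      = ?P * (e_shift j * (T (r 0) (d 0) * F j (r j) (d j)) - \<delta> * (T (r j) (d 0) * F j (r 0) (d j))) * ?S"
    unfolding row_step_def by (simp only: before swapped P S central_diff_middle[OF central_e_shift central_\<delta>])
  also have "\<dots> = ?P * (e_shift j * (F j (r j) (d j) * T (r 0) (d 0)) - \<delta> * (F j (r j) (d 0) * T (r 0) (d j))) * ?S"
    using T_F_relation[OF assms] by (simp add: e_shift_def)
  also have "\<dots> = col_step j (Tword j) r d"
    unfolding col_step_def by (simp only: after swapped P S central_diff_middle[OF central_e_shift central_\<delta>])
  finally show "row_step j (Tword (j - 1)) r d = col_step j (Tword j) r d" .
qed

lemma row_steps_Tword: "j \<le> m \<Longrightarrow> row_steps j (Tword 0) = col_steps j (Tword j)"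
proof (induction j)
  case 0
  then show ?case by simp
next
  case (Suc j)
  have "row_steps (Suc j) (Tword 0) = row_step (Suc j) (col_steps j (Tword j))"
    using Suc by simp
  also have "\<dots> = col_steps j (row_step (Suc j) (Tword j))"
    by (rule row_step_col_steps_commute)
  also have "row_step (Suc j) (Tword j) = col_step (Suc j) (Tword (Suc j))"
    using row_step_Tword[of "Suc j"] Suc.prems by simp
  finally show ?case by simp
qed

lemma transpose_0_comp_0: "i \<noteq> 0 \<Longrightarrow> i \<noteq> J \<Longrightarrow> J \<noteq> 0 \<Longrightarrow> \<tau> 0 J \<circ> \<tau> 0 i = \<tau> i J \<circ> \<tau> 0 J"
  by (auto simp: transpose_def fun_eq_iff)

lemma transpose_0_comp_0': "i \<noteq> 0 \<Longrightarrow> i \<noteq> J \<Longrightarrow> J \<noteq> 0 \<Longrightarrow> \<tau> 0 i \<circ> \<tau> 0 J = \<tau> 0 J \<circ> \<tau> i J"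
  by (auto simp: transpose_def fun_eq_iff)

lemma transpose_comp_disjoint:
  "i \<noteq> 0 \<Longrightarrow> i' \<noteq> 0 \<Longrightarrow> i \<noteq> J \<Longrightarrow> i' \<noteq> J \<Longrightarrow> \<tau> i i' \<circ> \<tau> 0 J = \<tau> 0 J \<circ> \<tau> i i'"
  by (auto simp: transpose_def fun_eq_iff)

definition central_linear :: "(((nat \<Rightarrow> nat) \<Rightarrow> (nat \<Rightarrow> nat) \<Rightarrow> 'r) \<Rightarrow> 'r) \<Rightarrow> bool" where
  "central_linear \<Phi> \<longleftrightarrow> (\<forall>A B. \<Phi> (\<lambda>r d. A r d + B r d) = \<Phi> A + \<Phi> B)
     \<and> (\<forall>c A. central c \<longrightarrow> \<Phi> (\<lambda>r d. c * A r d) = c * \<Phi> A)"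

lemma central_linear_diff:
  assumes "central_linear \<Phi>" "central c" "central c'"
  shows "\<Phi> (\<lambda>r d. c * A r d - c' * B r d) = c * \<Phi> A - c' * \<Phi> B"
proof -
  have add: "\<Phi> (\<lambda>r d. A' r d + B' r d) = \<Phi> A' + \<Phi> B'" for A' B'
    using assms(1) unfolding central_linear_def by blast
  have scale: "\<Phi> (\<lambda>r d. c * A r d) = c * \<Phi> A" "\<Phi> (\<lambda>r d. (- c') * B r d) = (- c') * \<Phi> B"
    using assms central_uminus[OF assms(3)] unfolding central_linear_def by blast+
  have "(\<lambda>r d. c * A r d - c' * B r d) = (\<lambda>r d. (\<lambda>r d. c * A r d) r d + (\<lambda>r d. (- c') * B r d) r d)"
    by (simp add: fun_eq_iff)
  then show ?thesis
    by (simp only: add scale) simp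
qed

definition alt_rows :: "(((nat \<Rightarrow> nat) \<Rightarrow> (nat \<Rightarrow> nat) \<Rightarrow> 'r) \<Rightarrow> 'r) \<Rightarrow> nat \<Rightarrow> bool" where
  "alt_rows \<Phi> j \<longleftrightarrow>
     (\<forall>i i' N. 1 \<le> i \<longrightarrow> i < i' \<longrightarrow> i' \<le> j \<longrightarrow> \<Phi> (\<lambda>r d. N (r \<circ> \<tau> i i') d) = - \<Phi> N)"

definition alt_cols :: "((nat \<Rightarrow> nat) \<Rightarrow> (nat \<Rightarrow> nat) \<Rightarrow> 'r) \<Rightarrow> nat \<Rightarrow> bool" where
  "alt_cols N j \<longleftrightarrow> (\<forall>i i' r d. 1 \<le> i \<longrightarrow> i < i' \<longrightarrow> i' \<le> j \<longrightarrow> N r (d \<circ> \<tau> i i') = - N r d)"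

lemma e_shift_Suc_combine:
  "e * (e_shift (Suc j) * a - \<delta> * b) - \<delta> * (e_shift (Suc j) * s + of_nat j * (\<delta> * b))
    = e_shift (Suc j) * (e * a - \<delta> * (s + b))"
proof -
  let ?E = "e_shift (Suc j)"
  have 1: "e * (?E * a) = ?E * (e * a)" "\<delta> * (?E * s) = ?E * (\<delta> * s)"
    using central_commute[OF central_e_shift, of "Suc j" e] central_commute[OF central_e_shift, of "Suc j" \<delta>]
    by (simp_all only: mult.assoc[symmetric])
  have 2: "?E * (\<delta> * b) = e * (\<delta> * b) + \<delta> * (of_nat j * (\<delta> * b))"
    unfolding e_shift_def using mult_of_nat_commute[of j \<delta>] by (simp add: distrib_right mult.assoc)
  have "e * (?E * a - \<delta> * b) - \<delta> * (?E * s + of_nat j * (\<delta> * b))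
      = ?E * (e * a) - e * (\<delta> * b) - ?E * (\<delta> * s) - \<delta> * (of_nat j * (\<delta> * b))"
    by (simp only: right_diff_distrib distrib_left 1 diff_diff_eq add.assoc)
  also have "\<dots> = ?E * (e * a) - ?E * (\<delta> * s) - ?E * (\<delta> * b)"
    unfolding 2 by (simp add: diff_diff_eq add_ac)
  also have "\<dots> = ?E * (e * a - \<delta> * (s + b))"
    by (simp add: right_diff_distrib distrib_left diff_diff_eq)
  finally show ?thesis .
qed

lemma alt_cols_col_step:
  assumes "alt_cols N (Suc j)"
  shows "alt_cols (col_step (Suc j) N) j"
  unfolding alt_cols_def
proof (intro allI impI)
  fix i i' :: nat and r d :: "nat \<Rightarrow> nat" assume h: "1 \<le> i" "i < i'" "i' \<le> j"
  have "d \<circ> \<tau> i i' \<circ> \<tau> 0 (Suc j) = (d \<circ> \<tau> 0 (Suc j)) \<circ> \<tau> i i'"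
    using transpose_comp_disjoint[of i i' "Suc j"] h by (simp add: comp_assoc)
  moreover have "N r (d \<circ> \<tau> i i') = - N r d" "N r ((d \<circ> \<tau> 0 (Suc j)) \<circ> \<tau> i i') = - N r (d \<circ> \<tau> 0 (Suc j))"
    using assms h unfolding alt_cols_def by auto
  ultimately show "col_step (Suc j) N r (d \<circ> \<tau> i i') = - col_step (Suc j) N r d"
    unfolding col_step_def by (simp add: algebra_simps)
qed

lemma sum_col_step_swap:
  assumes "alt_cols N (Suc j)"
  shows "(\<Sum>i=1..j. col_step (Suc j) N r (d \<circ> \<tau> 0 i))
    = e_shift (Suc j) * (\<Sum>i=1..j. N r (d \<circ> \<tau> 0 i)) + of_nat j * (\<delta> * N r (d \<circ> \<tau> 0 (Suc j)))"
proof -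
  have "col_step (Suc j) N r (d \<circ> \<tau> 0 i) = e_shift (Suc j) * N r (d \<circ> \<tau> 0 i) + \<delta> * N r (d \<circ> \<tau> 0 (Suc j))"
    if "i \<in> {1..j}" for i
  proof -
    have "d \<circ> \<tau> 0 i \<circ> \<tau> 0 (Suc j) = (d \<circ> \<tau> 0 (Suc j)) \<circ> \<tau> i (Suc j)"
      using transpose_0_comp_0'[of i "Suc j"] that by (simp add: comp_assoc)
    moreover have "N r ((d \<circ> \<tau> 0 (Suc j)) \<circ> \<tau> i (Suc j)) = - N r (d \<circ> \<tau> 0 (Suc j))"
      using assms that unfolding alt_cols_def by auto
    ultimately show ?thesis unfolding col_step_def by simp
  qed
  then show ?thesis by (simp add: sum.distrib sum_distrib_left)
qed

lemma col_steps_alt: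
  "1 \<le> j \<Longrightarrow> alt_cols N j \<Longrightarrow>
    col_steps j N = (\<lambda>r d. e_shift_prod j * (e * N r d - \<delta> * (\<Sum>i=1..j. N r (d \<circ> \<tau> 0 i))))"
proof (induction j arbitrary: N rule: nat_induct_at_least)
  case base
  show ?case by (simp add: fun_eq_iff col_step_def e_shift_def del: comp_apply)
next
  case (Suc j)
  let ?J = "Suc j"
  let ?N = "col_step ?J N"
  show ?case
  proof (intro ext)
    fix r d
    have "col_steps ?J N r d = e_shift_prod j * (e * ?N r d - \<delta> * (\<Sum>i=1..j. ?N r (d \<circ> \<tau> 0 i)))"
      using Suc.IH[OF alt_cols_col_step[OF Suc.prems]] by (simp del: comp_apply)
    also have "\<dots> = e_shift_prod j * (e * (e_shift ?J * N r d - \<delta> * N r (d \<circ> \<tau> 0 ?J))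
        - \<delta> * (e_shift ?J * (\<Sum>i=1..j. N r (d \<circ> \<tau> 0 i)) + of_nat j * (\<delta> * N r (d \<circ> \<tau> 0 ?J))))"
      unfolding sum_col_step_swap[OF Suc.prems] by (simp add: col_step_def)
    also have "\<dots> = e_shift_prod j * e_shift ?J
        * (e * N r d - \<delta> * ((\<Sum>i=1..j. N r (d \<circ> \<tau> 0 i)) + N r (d \<circ> \<tau> 0 ?J)))"
      by (simp add: e_shift_Suc_combine mult.assoc)
    also have "\<dots> = e_shift_prod ?J * (e * N r d - \<delta> * (\<Sum>i=1..?J. N r (d \<circ> \<tau> 0 i)))"
      using Suc.hyps by (cases j) auto
    finally show "col_steps ?J N r d = e_shift_prod ?J * (e * N r d - \<delta> * (\<Sum>i=1..?J. N r (d \<circ> \<tau> 0 i)))" .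
  qed
qed

lemma central_linear_row_step:
  assumes "central_linear \<Phi>"
  shows "central_linear (\<lambda>X. \<Phi> (row_step j X))"
  unfolding central_linear_def
proof (intro conjI allI impI)
  fix A B
  have "row_step j (\<lambda>r d. A r d + B r d) = (\<lambda>r d. row_step j A r d + row_step j B r d)"
    by (simp add: row_step_def fun_eq_iff algebra_simps)
  then show "\<Phi> (row_step j (\<lambda>r d. A r d + B r d)) = \<Phi> (row_step j A) + \<Phi> (row_step j B)"
    using assms unfolding central_linear_def by simp
next
  fix c A assume c: "central (c::'r)"
  have "e_shift j * (c * x) - \<delta> * (c * y) = c * (e_shift j * x - \<delta> * y)" for x y
    using central_commute[OF c, of "e_shift j"] central_commute[OF c, of \<delta>]
    by (simp add: right_diff_distrib mult.assoc[symmetric])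
  then have "row_step j (\<lambda>r d. c * A r d) = (\<lambda>r d. c * row_step j A r d)"
    by (simp add: row_step_def fun_eq_iff)
  then show "\<Phi> (row_step j (\<lambda>r d. c * A r d)) = c * \<Phi> (row_step j A)"
    using assms c unfolding central_linear_def by simp
qed

lemma alt_rows_row_step:
  assumes "alt_rows \<Phi> (Suc j)"
  shows "alt_rows (\<lambda>X. \<Phi> (row_step (Suc j) X)) j"
  unfolding alt_rows_def
proof (intro allI impI)
  fix i i' N assume h: "1 \<le> (i::nat)" "i < i'" "i' \<le> j"
  have "r \<circ> \<tau> 0 (Suc j) \<circ> \<tau> i i' = r \<circ> \<tau> i i' \<circ> \<tau> 0 (Suc j)" for r :: "nat \<Rightarrow> nat"
    using transpose_comp_disjoint[of i i' "Suc j"] h by (simp add: comp_assoc)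
  then have "row_step (Suc j) (\<lambda>r d. N (r \<circ> \<tau> i i') d) = (\<lambda>r d. row_step (Suc j) N (r \<circ> \<tau> i i') d)"
    by (simp only: row_step_def)
  then show "\<Phi> (row_step (Suc j) (\<lambda>r d. N (r \<circ> \<tau> i i') d)) = - \<Phi> (row_step (Suc j) N)"
    using assms h unfolding alt_rows_def by simp
qed

lemma row_step_swap:
  assumes "central_linear \<Phi>" and "alt_rows \<Phi> (Suc j)" and "i \<in> {1..j}"
  shows "\<Phi> (row_step (Suc j) (\<lambda>r d. N (r \<circ> \<tau> 0 i) d))
    = e_shift (Suc j) * \<Phi> (\<lambda>r d. N (r \<circ> \<tau> 0 i) d) + \<delta> * \<Phi> (\<lambda>r d. N (r \<circ> \<tau> 0 (Suc j)) d)"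
proof -
  let ?J = "Suc j"
  have "r \<circ> \<tau> 0 ?J \<circ> \<tau> 0 i = r \<circ> \<tau> i ?J \<circ> \<tau> 0 ?J" for r :: "nat \<Rightarrow> nat"
    using transpose_0_comp_0[of i ?J] assms(3) by (simp add: comp_assoc)
  then have h: "(\<lambda>r d. N (r \<circ> \<tau> 0 ?J \<circ> \<tau> 0 i) d) = (\<lambda>r d. (\<lambda>r d. N (r \<circ> \<tau> 0 ?J) d) (r \<circ> \<tau> i ?J) d)"
    by simp
  have "\<Phi> (row_step ?J (\<lambda>r d. N (r \<circ> \<tau> 0 i) d))
      = e_shift ?J * \<Phi> (\<lambda>r d. N (r \<circ> \<tau> 0 i) d) - \<delta> * \<Phi> (\<lambda>r d. N (r \<circ> \<tau> 0 ?J \<circ> \<tau> 0 i) d)"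
    unfolding row_step_def by (rule central_linear_diff[OF assms(1) central_e_shift central_\<delta>])
  also have "\<Phi> (\<lambda>r d. N (r \<circ> \<tau> 0 ?J \<circ> \<tau> 0 i) d) = - \<Phi> (\<lambda>r d. N (r \<circ> \<tau> 0 ?J) d)"
  proof -
    have "\<And>M. \<Phi> (\<lambda>r d. M (r \<circ> \<tau> i ?J) d) = - \<Phi> M"
      using assms(2,3) unfolding alt_rows_def by auto
    then show ?thesis unfolding h .
  qed
  finally show ?thesis by (simp only: diff_minus_eq_add mult_minus_right)
qed

lemma row_steps_alt:
  "1 \<le> j \<Longrightarrow> central_linear \<Phi> \<Longrightarrow> alt_rows \<Phi> j \<Longrightarrow>
    \<Phi> (row_steps j N) = e_shift_prod j * (e * \<Phi> N - \<delta> * (\<Sum>i=1..j. \<Phi> (\<lambda>r d. N (r \<circ> \<tau> 0 i) d)))"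
proof (induction j arbitrary: \<Phi> N rule: nat_induct_at_least)
  case base
  then show ?case
    using central_linear_diff[OF base(1) central_e_shift central_\<delta>, of 1 N "\<lambda>r d. N (r \<circ> \<tau> 0 1) d"]
    by (simp add: row_step_def e_shift_def del: comp_apply)
next
  case (Suc j)
  let ?J = "Suc j"
  define \<Psi> where "\<Psi> = (\<lambda>X. \<Phi> (row_step ?J X))"
  have IH: "\<Psi> (row_steps j N) = e_shift_prod j * (e * \<Psi> N - \<delta> * (\<Sum>i=1..j. \<Psi> (\<lambda>r d. N (r \<circ> \<tau> 0 i) d)))"
    using Suc.IH[OF central_linear_row_step[OF Suc.prems(1)] alt_rows_row_step[OF Suc.prems(2)]]
    unfolding \<Psi>_def .
  have \<Psi>N: "\<Psi> N = e_shift ?J * \<Phi> N - \<delta> * \<Phi> (\<lambda>r d. N (r \<circ> \<tau> 0 ?J) d)"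
    unfolding \<Psi>_def row_step_def by (rule central_linear_diff[OF Suc.prems(1) central_e_shift central_\<delta>])
  have "\<Phi> (row_steps ?J N) = \<Psi> (row_steps j N)" by (simp add: \<Psi>_def)
  also have "\<dots> = e_shift_prod j * (e * (e_shift ?J * \<Phi> N - \<delta> * \<Phi> (\<lambda>r d. N (r \<circ> \<tau> 0 ?J) d))
      - \<delta> * (e_shift ?J * (\<Sum>i=1..j. \<Phi> (\<lambda>r d. N (r \<circ> \<tau> 0 i) d)) + of_nat j * (\<delta> * \<Phi> (\<lambda>r d. N (r \<circ> \<tau> 0 ?J) d))))"
    using IH \<Psi>N unfolding \<Psi>_def by (simp add: row_step_swap[OF Suc.prems] sum.distrib sum_distrib_left)
  also have "\<dots> = e_shift_prod j * e_shift ?J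
      * (e * \<Phi> N - \<delta> * ((\<Sum>i=1..j. \<Phi> (\<lambda>r d. N (r \<circ> \<tau> 0 i) d)) + \<Phi> (\<lambda>r d. N (r \<circ> \<tau> 0 ?J) d)))"
    by (simp add: e_shift_Suc_combine mult.assoc)
  also have "\<dots> = e_shift_prod ?J * (e * \<Phi> N - \<delta> * (\<Sum>i=1..?J. \<Phi> (\<lambda>r d. N (r \<circ> \<tau> 0 i) d)))"
    using Suc.hyps by (cases j) auto
  finally show ?case .
qed

definition row_antisym :: "((nat \<Rightarrow> nat) \<Rightarrow> (nat \<Rightarrow> nat) \<Rightarrow> 'r) \<Rightarrow> (nat \<Rightarrow> nat) \<Rightarrow> (nat \<Rightarrow> nat) \<Rightarrow> 'r" where
  "row_antisym N = (\<lambda>r d. \<Sum>\<sigma>\<in>{\<sigma>. \<sigma> permutes {1..m}}. of_int (sign \<sigma>) * N (r \<circ> \<sigma>) d)"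

lemma row_antisym_col_step: "row_antisym (col_step i N) = col_step i (row_antisym N)"
proof -
  have "of_int z * (e_shift i * x - \<delta> * y) = e_shift i * (of_int z * x) - \<delta> * (of_int z * y)" for z x y
    using central_commute[OF central_e_shift, of i "of_int z"] central_commute[OF central_\<delta>, of "of_int z"]
    by (simp add: right_diff_distrib mult.assoc[symmetric])
  then show ?thesis
    unfolding row_antisym_def col_step_def by (simp add: fun_eq_iff sum_subtractf sum_distrib_left)
qed

lemma row_antisym_col_steps: "row_antisym (col_steps i N) = col_steps i (row_antisym N)"
  by (induction i arbitrary: N) (simp_all add: row_antisym_col_step)

lemma central_linear_row_antisym: "central_linear (\<lambda>N. row_antisym N r d)"
  unfolding central_linear_def
proof (intro conjI allI impI)
  fix A B
  show "row_antisym (\<lambda>r d. A r d + B r d) r d = row_antisym A r d + row_antisym B r d"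
    by (simp add: row_antisym_def distrib_left sum.distrib)
next
  fix c A assume c: "central (c::'r)"
  have "of_int z * (c * x) = c * (of_int z * x)" for z x
    using central_commute[OF c, of "of_int z"] by (simp add: mult.assoc[symmetric])
  then show "row_antisym (\<lambda>r d. c * A r d) r d = c * row_antisym A r d"
    by (simp add: row_antisym_def sum_distrib_left)
qed

lemma alt_rows_row_antisym: "alt_rows (\<lambda>N. row_antisym N r d) m"
  unfolding alt_rows_def
proof (intro allI impI)
  fix i i' N assume h: "1 \<le> (i::nat)" "i < i'" "i' \<le> m"
  show "row_antisym (\<lambda>r d. N (r \<circ> \<tau> i i') d) r d = - row_antisym N r d"
    using sum_sign_compose_transpose[OF h, of "\<lambda>\<sigma>. N (r \<circ> \<sigma>) d"]
    by (simp add: row_antisym_def comp_assoc del: comp_apply)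
qed

lemma row_antisym_Tword_last: "row_antisym (Tword m) r d = minor F m r d * T (r 0) (d 0)"
proof -
  have "of_int (sign \<sigma>) * Tword m (r \<circ> \<sigma>) d = of_int (sign \<sigma>) * seg_prod F 1 m (r \<circ> \<sigma>) d * T (r 0) (d 0)"
    if "\<sigma> \<in> {\<sigma>. \<sigma> permutes {1..m}}" for \<sigma>
    using permutes_interval_fixes_0[OF that] by (simp add: Tword_def seg_prod_empty mult.assoc)
  then show ?thesis
    unfolding row_antisym_def minor_def sum_distrib_right by (intro sum.cong) auto
qed

lemma alt_cols_row_antisym_Tword_last:
  assumes "\<And>a b i i'. 1 \<le> i \<Longrightarrow> i < i' \<Longrightarrow> i' \<le> m \<Longrightarrow> minor F m a (b \<circ> \<tau> i i') = - minor F m a b"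
  shows "alt_cols (row_antisym (Tword m)) m"
  unfolding alt_cols_def row_antisym_Tword_last
proof (intro allI impI)
  fix i i' :: nat and r d :: "nat \<Rightarrow> nat" assume h: "1 \<le> i" "i < i'" "i' \<le> m"
  then have "(d \<circ> \<tau> i i') 0 = d 0" by (simp add: transpose_def)
  then show "minor F m r (d \<circ> \<tau> i i') * T (r 0) ((d \<circ> \<tau> i i') 0) = - (minor F m r d * T (r 0) (d 0))"
    using assms[OF h] by simp
qed

text \<open>Both sides of \<open>row_steps_Tword\<close>, antisymmetrised over the rows, telescope to
  \<open>e_shift_prod m\<close> times one side of the commutator formula.\<close>

lemma e_shift_prod_identity:
  assumes "1 \<le> m" and "alt_cols (row_antisym (Tword m)) m"
  shows "e_shift_prod m * (e * row_antisym (Tword 0) r d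
           - \<delta> * (\<Sum>i=1..m. row_antisym (\<lambda>r d. Tword 0 (r \<circ> \<tau> 0 i) d) r d))
       = e_shift_prod m * (e * row_antisym (Tword m) r d
           - \<delta> * (\<Sum>i=1..m. row_antisym (Tword m) r (d \<circ> \<tau> 0 i)))"
proof -
  have "row_antisym (row_steps m (Tword 0)) r d = row_antisym (col_steps m (Tword m)) r d"
    using row_steps_Tword by simp
  then show ?thesis
    unfolding row_steps_alt[OF assms(1) central_linear_row_antisym alt_rows_row_antisym]
      row_antisym_col_steps col_steps_alt[OF assms] .
qed

lemma row_antisym_Tword_first:
  "row_antisym (Tword 0) (a(0 := k)) (b(0 := l)) = T k l * minor F m a b"
proof -
  have "of_int (sign \<sigma>) * Tword 0 (a(0 := k) \<circ> \<sigma>) (b(0 := l)) = T k l * (of_int (sign \<sigma>) * seg_prod F 1 m (a \<circ> \<sigma>) b)"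
    if s: "\<sigma> \<in> {\<sigma>. \<sigma> permutes {1..m}}" for \<sigma>
  proof -
    have "seg_prod F 1 m (a(0 := k) \<circ> \<sigma>) (b(0 := l)) = seg_prod F 1 m (a \<circ> \<sigma>) b"
    proof (rule seg_prod_cong)
      fix j assume "1 \<le> j" "j \<le> m"
      then have "\<sigma> j \<in> {1..m}" using permutes_interval_in[OF s, of j] by auto
      then show "(a(0 := k) \<circ> \<sigma>) j = (a \<circ> \<sigma>) j \<and> (b(0 := l)) j = b j" using \<open>1 \<le> j\<close> by auto
    qed
    then show ?thesis
      using permutes_interval_fixes_0[OF s]
      by (simp add: Tword_def seg_prod_empty) (metis mult.assoc mult_of_int_commute)
  qed
  then show ?thesis
    unfolding row_antisym_def minor_def sum_distrib_left by (intro sum.cong) auto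
qed

lemma mult_of_int_left_commute: "of_int z * (X * Y) = X * (of_int z * (Y::'r))"
  by (metis mult.assoc mult_of_int_commute)

lemma sum_row_antisym_Tword_first_swap:
  "(\<Sum>i=1..m. row_antisym (\<lambda>r d. Tword 0 (r \<circ> \<tau> 0 i) d) (a(0 := k)) (b(0 := l)))
    = (\<Sum>i=1..m. T (a i) l * minor F m (a(i := k)) b)"
proof -
  let ?P = "{\<sigma>. \<sigma> permutes {1..m}}"
  define g where "g = (\<lambda>\<sigma> i'. of_int (sign \<sigma>) * (T (a i') l * seg_prod F 1 m (a(i' := k) \<circ> \<sigma>) b))"
  have summand: "of_int (sign \<sigma>) * Tword 0 (a(0 := k) \<circ> \<sigma> \<circ> \<tau> 0 i) (b(0 := l)) = g \<sigma> (\<sigma> i)"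
    if s: "\<sigma> \<in> ?P" and i: "i \<in> {1..m}" for \<sigma> i
  proof -
    have "seg_prod F 1 m (a(0 := k) \<circ> \<sigma> \<circ> \<tau> 0 i) (b(0 := l)) = seg_prod F 1 m (a(\<sigma> i := k) \<circ> \<sigma>) b"
    proof (rule seg_prod_cong)
      fix j assume j: "1 \<le> j" "j \<le> m"
      have "\<sigma> j \<noteq> 0" using permutes_interval_in[OF s, of j] j by auto
      moreover have "j \<noteq> i \<Longrightarrow> \<sigma> j \<noteq> \<sigma> i"
        using s by (auto dest: permutes_inj inj_onD[where A=UNIV])
      ultimately show "(a(0 := k) \<circ> \<sigma> \<circ> \<tau> 0 i) j = (a(\<sigma> i := k) \<circ> \<sigma>) j \<and> (b(0 := l)) j = b j"
        using j permutes_interval_fixes_0[OF s] by (auto simp: transpose_def)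
    qed
    moreover have "(a(0 := k) \<circ> \<sigma> \<circ> \<tau> 0 i) 0 = a (\<sigma> i)"
      using permutes_interval_in[OF s i] by (auto simp: transpose_def)
    ultimately show ?thesis
      unfolding Tword_def g_def by (simp add: seg_prod_empty del: comp_apply)
  qed
  have "(\<Sum>i=1..m. row_antisym (\<lambda>r d. Tword 0 (r \<circ> \<tau> 0 i) d) (a(0 := k)) (b(0 := l)))
      = (\<Sum>i=1..m. \<Sum>\<sigma>\<in>?P. g \<sigma> (\<sigma> i))"
    unfolding row_antisym_def using summand by (intro sum.cong refl) (simp add: comp_assoc)
  also have "\<dots> = (\<Sum>\<sigma>\<in>?P. \<Sum>i=1..m. g \<sigma> (\<sigma> i))" by (rule sum.swap)
  also have "\<dots> = (\<Sum>\<sigma>\<in>?P. \<Sum>i=1..m. g \<sigma> i)"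
  proof (rule sum.cong[OF refl])
    fix \<sigma> assume "\<sigma> \<in> ?P"
    then show "(\<Sum>i=1..m. g \<sigma> (\<sigma> i)) = (\<Sum>i=1..m. g \<sigma> i)"
      using sum.reindex_bij_betw[OF permutes_imp_bij[of \<sigma> "{1..m}"], of "g \<sigma>"] by simp
  qed
  also have "\<dots> = (\<Sum>i=1..m. \<Sum>\<sigma>\<in>?P. g \<sigma> i)" by (rule sum.swap)
  also have "\<dots> = (\<Sum>i=1..m. T (a i) l * minor F m (a(i := k)) b)"
    unfolding g_def minor_def sum_distrib_left mult_of_int_left_commute ..
  finally show ?thesis .
qed

lemma e_shift_prod_cancel:
  "\<forall>i x. 2 \<le> i \<longrightarrow> i \<le> m \<longrightarrow> e_shift i * x = 0 \<longrightarrow> x = 0 \<Longrightarrow>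
    j \<le> m \<Longrightarrow> e_shift_prod j * x = 0 \<Longrightarrow> x = 0"
proof (induction j arbitrary: x rule: e_shift_prod.induct)
  case (3 j)
  have "e_shift_prod (Suc j) * (e_shift (Suc (Suc j)) * x) = 0"
    using 3(4) by (simp add: mult.assoc)
  then have "e_shift (Suc (Suc j)) * x = 0"
    using 3(1)[OF 3(2)] 3(3) Suc_leD by blast
  moreover have "2 \<le> Suc (Suc j)" by simp
  ultimately show ?case using 3(2) 3(3) by blast
qed simp_all

theorem minor_commutator:
  assumes col_alt: "\<And>a b i i'. 1 \<le> i \<Longrightarrow> i < i' \<Longrightarrow> i' \<le> m \<Longrightarrow> minor F m a (b \<circ> \<tau> i i') = - minor F m a b"
    and cancel: "\<forall>i x. 2 \<le> i \<longrightarrow> i \<le> m \<longrightarrow> e_shift i * x = 0 \<longrightarrow> x = 0"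
    and "1 \<le> m"
  shows "e * (T k l * minor F m a b - minor F m a b * T k l) =
    \<delta> * ((\<Sum>i=1..m. T (a i) l * minor F m (a(i := k)) b) - (\<Sum>i=1..m. minor F m a (b(i := l)) * T k (b i)))"
proof -
  have diff_swap: "x1 - y1 - (x2 - y2) = 0 \<Longrightarrow> x1 - x2 = y1 - y2" for x1 y1 x2 y2 :: 'r
    by (simp add: algebra_simps)
  let ?r = "a(0 := k)" and ?d = "b(0 := l)"
  have minor_extend: "minor F m ?r d' = minor F m a d'" "minor F m r' ?d = minor F m r' b" for r' d'
    by (rule minor_cong; simp)+
  have last: "row_antisym (Tword m) ?r ?d = minor F m a b * T k l"
    by (simp add: row_antisym_Tword_last minor_extend)
  have last_swap: "(\<Sum>i=1..m. row_antisym (Tword m) ?r (?d \<circ> \<tau> 0 i))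
      = (\<Sum>i=1..m. minor F m a (b(i := l)) * T k (b i))"
  proof (intro sum.cong refl)
    fix i assume i: "i \<in> {1..m}"
    have "minor F m ?r (?d \<circ> \<tau> 0 i) = minor F m a (b(i := l))"
      by (rule minor_cong) (use i in \<open>auto simp: transpose_def\<close>)
    moreover have "(?d \<circ> \<tau> 0 i) 0 = b i" using i by (auto simp: transpose_def)
    ultimately show "row_antisym (Tword m) ?r (?d \<circ> \<tau> 0 i) = minor F m a (b(i := l)) * T k (b i)"
      by (simp add: row_antisym_Tword_last)
  qed
  have "e_shift_prod m * ((e * (T k l * minor F m a b) - \<delta> * (\<Sum>i=1..m. T (a i) l * minor F m (a(i := k)) b))
      - (e * (minor F m a b * T k l) - \<delta> * (\<Sum>i=1..m. minor F m a (b(i := l)) * T k (b i)))) = 0"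
    using e_shift_prod_identity[OF \<open>1 \<le> m\<close> alt_cols_row_antisym_Tword_last[OF col_alt], of ?r ?d]
    unfolding row_antisym_Tword_first sum_row_antisym_Tword_first_swap last last_swap
    by (simp add: right_diff_distrib)
  from e_shift_prod_cancel[OF cancel order_refl this] show ?thesis
    unfolding right_diff_distrib by (rule diff_swap)
qed

end


section \<open>Substitution into power series over a complex algebra\<close>

lemma complex_alg_add: "complex_alg sc \<Longrightarrow> sc (x + y) = sc x + sc y"
  unfolding complex_alg_def by blast

lemma complex_alg_mult: "complex_alg sc \<Longrightarrow> sc (x * y) = sc x * sc y"
  unfolding complex_alg_def by blast

lemma complex_alg_one: "complex_alg sc \<Longrightarrow> sc 1 = 1"
  unfolding complex_alg_def by blast

lemma complex_alg_commute: "complex_alg sc \<Longrightarrow> sc x * a = a * sc x"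
  unfolding complex_alg_def by blast

lemma complex_alg_zero: "complex_alg sc \<Longrightarrow> sc 0 = 0"
proof -
  assume a: "complex_alg sc"
  have "sc (0 + 0) = sc 0 + sc 0" by (rule complex_alg_add[OF a])
  then show ?thesis by simp
qed

lemma complex_alg_uminus: "complex_alg sc \<Longrightarrow> sc (- x) = - sc x"
proof -
  assume a: "complex_alg sc"
  have "sc (x + - x) = sc x + sc (- x)" by (rule complex_alg_add[OF a])
  then have "sc x + sc (- x) = 0" using complex_alg_zero[OF a] by simp
  then show ?thesis by (simp add: neg_eq_iff_add_eq_0[symmetric])
qed

lemma complex_alg_diff: "complex_alg sc \<Longrightarrow> sc (x - y) = sc x - sc y"
  using complex_alg_add[of sc x "- y"] complex_alg_uminus[of sc y] by simp

lemma complex_alg_sum: "complex_alg sc \<Longrightarrow> sc (sum f A) = (\<Sum>x\<in>A. sc (f x))"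
  by (induction A rule: infinite_finite_induct) (auto simp: complex_alg_zero complex_alg_add)

lemma central_complex_alg: "complex_alg sc \<Longrightarrow> central (sc x)"
  by (simp add: central_def complex_alg_commute)

lemma complex_alg_id: "complex_alg (\<lambda>x::complex. x)"
  by (simp add: complex_alg_def)

definition cmap :: "(complex \<Rightarrow> 'b::ring_1) \<Rightarrow> complex fps \<Rightarrow> 'b fps" where
  "cmap sc z = Abs_fps (\<lambda>n. sc (z $ n))"

lemma cmap_nth[simp]: "cmap sc z $ n = sc (z $ n)" by (simp add: cmap_def)

text \<open>\<open>fps_subst sc G f\<close> is \<open>f\<close> with its variable replaced by \<open>G\<close>; complex coefficients of the
  substituted series enter \<open>f\<close>'s coefficient ring through \<open>sc\<close>.\<close>

definition fps_subst :: "(complex \<Rightarrow> 'b::ring_1) \<Rightarrow> complex fps \<Rightarrow> 'b fps \<Rightarrow> 'b fps" where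
  "fps_subst sc G f = Abs_fps (\<lambda>N. \<Sum>r\<le>N. f $ r * sc ((G ^ r) $ N))"

lemma fps_subst_nth: "fps_subst sc G f $ N = (\<Sum>r\<le>N. f $ r * sc ((G ^ r) $ N))"
  by (simp add: fps_subst_def)

lemma fps_subst_nth_ext:
  assumes sc: "complex_alg sc" and G0: "G $ 0 = 0" and iK: "i \<le> K"
  shows "fps_subst sc G f $ i = (\<Sum>r\<le>K. f $ r * sc ((G ^ r) $ i))"
proof -
  have "(\<Sum>r\<le>K. f $ r * sc ((G ^ r) $ i)) = (\<Sum>r\<le>i. f $ r * sc ((G ^ r) $ i))"
  proof (rule sum.mono_neutral_right)
    show "\<forall>r\<in>{..K} - {..i}. f $ r * sc ((G ^ r) $ i) = 0"
      using startsby_zero_power_prefix[OF G0] complex_alg_zero[OF sc] by auto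
  qed (use iK in auto)
  then show ?thesis by (simp add: fps_subst_nth)
qed

lemma fps_subst_add: "fps_subst sc G (f + h) = fps_subst sc G f + fps_subst sc G h"
  by (simp add: fps_eq_iff fps_subst_nth distrib_right sum.distrib)

lemma fps_subst_uminus: "fps_subst sc G (- f) = - fps_subst sc G f"
  by (simp add: fps_eq_iff fps_subst_nth sum_negf)

lemma fps_subst_diff: "fps_subst sc G (f - h) = fps_subst sc G f - fps_subst sc G h"
  using fps_subst_add[of sc G f "- h"] fps_subst_uminus[of sc G h] by simp

lemma fps_subst_zero: "fps_subst sc G 0 = 0"
  by (simp add: fps_eq_iff fps_subst_nth)

lemma fps_subst_sum: "fps_subst sc G (sum f A) = (\<Sum>x\<in>A. fps_subst sc G (f x))"
  by (induction A rule: infinite_finite_induct) (auto simp: fps_subst_zero fps_subst_add)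

lemma fps_subst_const:
  assumes "complex_alg sc"
  shows "fps_subst sc G (fps_const c) = fps_const c"
proof -
  have "fps_subst sc G (fps_const c) $ N = fps_const c $ N" for N
  proof -
    have "fps_subst sc G (fps_const c) $ N = (\<Sum>r\<le>N. (if r = 0 then c * sc ((G ^ r) $ N) else 0))"
      unfolding fps_subst_nth by (intro sum.cong refl) simp
    also have "\<dots> = c * sc ((G ^ 0) $ N)" by (simp add: sum.delta)
    finally show ?thesis using assms by (cases N) (simp_all add: complex_alg_one complex_alg_zero)
  qed
  then show ?thesis by (simp add: fps_eq_iff)
qed

lemma fps_subst_one: "complex_alg sc \<Longrightarrow> fps_subst sc G 1 = 1"
  using fps_subst_const[of sc G 1] by simp

lemma fps_subst_X:
  assumes "complex_alg sc" and G0: "G $ 0 = 0"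
  shows "fps_subst sc G fps_X = cmap sc G"
proof -
  have "fps_subst sc G fps_X $ N = cmap sc G $ N" for N
  proof (cases N)
    case 0 then show ?thesis using assms G0 by (simp add: fps_subst_nth fps_X_def complex_alg_zero)
  next
    case (Suc M)
    have "fps_subst sc G fps_X $ N = (\<Sum>r\<le>N. (if r = 1 then sc ((G ^ r) $ N) else 0))"
      unfolding fps_subst_nth by (intro sum.cong refl) (simp add: fps_X_def)
    also have "\<dots> = sc (G $ N)" using Suc by (simp add: sum.delta)
    finally show ?thesis by simp
  qed
  then show ?thesis by (simp add: fps_eq_iff)
qed

lemma sum_triangle_eq_square:
  fixes N :: nat
  assumes "\<And>r s. N < r + s \<Longrightarrow> g r s = 0"
  shows "(\<Sum>q\<le>N. \<Sum>r\<le>q. g r (q - r)) = (\<Sum>r\<le>N. \<Sum>s\<le>N. (g r s :: 'b::comm_monoid_add))"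
proof -
  have "(\<Sum>q\<le>N. \<Sum>r\<le>q. g r (q - r)) = (\<Sum>(r, s)\<in>{(r, s). r + s \<le> N}. g r s)"
    by (rule sum.triangle_reindex_eq[symmetric])
  also have "\<dots> = (\<Sum>(r, s)\<in>{..N} \<times> {..N}. g r s)"
    by (rule sum.mono_neutral_left) (use assms not_le in auto)
  also have "\<dots> = (\<Sum>r\<le>N. \<Sum>s\<le>N. g r s)"
    by (rule sum.cartesian_product[symmetric])
  finally show ?thesis .
qed

lemma fps_subst_mult:
  assumes sc: "complex_alg sc" and G0: "G $ 0 = 0"
  shows "fps_subst sc G (f * h) = fps_subst sc G f * fps_subst sc G h"
proof -
  have "fps_subst sc G (f * h) $ N = (fps_subst sc G f * fps_subst sc G h) $ N" for N
  proof -
    define c where "c = (\<lambda>q. sc ((G ^ q) $ N))"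
    have c0: "q > N \<Longrightarrow> c q = 0" for q
      using startsby_zero_power_prefix[OF G0] complex_alg_zero[OF sc] by (auto simp: c_def)
    have "fps_subst sc G (f * h) $ N = (\<Sum>q\<le>N. \<Sum>r\<le>q. f $ r * h $ (q - r) * c (r + (q - r)))"
      unfolding fps_subst_nth fps_mult_nth c_def atLeast0AtMost by (simp add: sum_distrib_right)
    also have "\<dots> = (\<Sum>r\<le>N. \<Sum>s\<le>N. f $ r * h $ s * c (r + s))"
      by (rule sum_triangle_eq_square) (simp add: c0)
    also have "\<dots> = (\<Sum>r\<le>N. \<Sum>s\<le>N. \<Sum>i=0..N. f $ r * sc ((G ^ r) $ i) * (h $ s * sc ((G ^ s) $ (N - i))))"
    proof (intro sum.cong refl)
      fix r s
      have "c (r + s) = (\<Sum>i=0..N. sc ((G ^ r) $ i) * sc ((G ^ s) $ (N - i)))"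
        unfolding c_def power_add fps_mult_nth using sc by (simp add: complex_alg_sum complex_alg_mult)
      then have "f $ r * h $ s * c (r + s) = (\<Sum>i=0..N. f $ r * h $ s * (sc ((G ^ r) $ i) * sc ((G ^ s) $ (N - i))))"
        by (simp add: sum_distrib_left)
      also have "\<dots> = (\<Sum>i=0..N. f $ r * sc ((G ^ r) $ i) * (h $ s * sc ((G ^ s) $ (N - i))))"
      proof (intro sum.cong refl)
        fix i
        have "h $ s * sc ((G ^ r) $ i) = sc ((G ^ r) $ i) * h $ s" using complex_alg_commute[OF sc] by simp
        then show "f $ r * h $ s * (sc ((G ^ r) $ i) * sc ((G ^ s) $ (N - i))) = f $ r * sc ((G ^ r) $ i) * (h $ s * sc ((G ^ s) $ (N - i)))"
          by (simp add: mult.assoc) (simp add: mult.assoc[symmetric])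
      qed
      finally show "f $ r * h $ s * c (r + s) = \<dots>" .
    qed
    also have "\<dots> = (\<Sum>i=0..N. (\<Sum>r\<le>N. f $ r * sc ((G ^ r) $ i)) * (\<Sum>s\<le>N. h $ s * sc ((G ^ s) $ (N - i))))"
    proof -
      have "(\<Sum>i=0..N. (\<Sum>r\<le>N. f $ r * sc ((G ^ r) $ i)) * (\<Sum>s\<le>N. h $ s * sc ((G ^ s) $ (N - i))))
          = (\<Sum>i=0..N. \<Sum>r\<le>N. \<Sum>s\<le>N. f $ r * sc ((G ^ r) $ i) * (h $ s * sc ((G ^ s) $ (N - i))))"
        by (simp only: sum_product)
      also have "\<dots> = (\<Sum>r\<le>N. \<Sum>i=0..N. \<Sum>s\<le>N. f $ r * sc ((G ^ r) $ i) * (h $ s * sc ((G ^ s) $ (N - i))))"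
        by (rule sum.swap)
      also have "\<dots> = (\<Sum>r\<le>N. \<Sum>s\<le>N. \<Sum>i=0..N. f $ r * sc ((G ^ r) $ i) * (h $ s * sc ((G ^ s) $ (N - i))))"
        by (rule sum.cong[OF refl], rule sum.swap)
      finally show ?thesis by (rule sym)
    qed
    also have "\<dots> = (\<Sum>i=0..N. fps_subst sc G f $ i * fps_subst sc G h $ (N - i))"
      by (intro sum.cong refl) (simp add: fps_subst_nth_ext[OF sc G0, of _ N])
    also have "\<dots> = (fps_subst sc G f * fps_subst sc G h) $ N" by (simp add: fps_mult_nth)
    finally show ?thesis .
  qed
  then show ?thesis by (simp add: fps_eq_iff)
qed

lemma central_fps: "(\<And>n. central (f $ n)) \<Longrightarrow> central (f :: 'b::ring_1 fps)"
proof -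
  assume c: "\<And>n. central (f $ n)"
  have "(f * g) $ n = (g * f) $ n" for g n
  proof -
    have "(g * f) $ n = (\<Sum>i=0..n. g $ (n + 0 - i) * f $ (n - (n + 0 - i)))"
      unfolding fps_mult_nth by (rule sum.atLeastAtMost_rev)
    also have "\<dots> = (\<Sum>i=0..n. f $ i * g $ (n - i))"
      by (intro sum.cong refl) (use c in \<open>auto simp: central_def\<close>)
    finally show ?thesis by (simp add: fps_mult_nth)
  qed
  then show ?thesis by (simp add: central_def fps_eq_iff)
qed

lemma cmap_add: "complex_alg sc \<Longrightarrow> cmap sc (z + w) = cmap sc z + cmap sc w"
  by (simp add: fps_eq_iff complex_alg_add)

lemma cmap_diff: "complex_alg sc \<Longrightarrow> cmap sc (z - w) = cmap sc z - cmap sc w"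
  by (simp add: fps_eq_iff complex_alg_diff)

lemma cmap_mult: "complex_alg sc \<Longrightarrow> cmap sc (z * w) = cmap sc z * cmap sc w"
  by (simp add: fps_eq_iff fps_mult_nth complex_alg_sum complex_alg_mult)

lemma cmap_one: "complex_alg sc \<Longrightarrow> cmap sc 1 = 1"
  by (simp add: fps_eq_iff complex_alg_one complex_alg_zero)

lemma cmap_zero: "complex_alg sc \<Longrightarrow> cmap sc 0 = 0"
  by (simp add: fps_eq_iff complex_alg_zero)

lemma cmap_const: "complex_alg sc \<Longrightarrow> cmap sc (fps_const c) = fps_const (sc c)"
  by (simp add: fps_eq_iff complex_alg_zero)

lemma cmap_X: "complex_alg sc \<Longrightarrow> cmap sc fps_X = fps_X"
  by (simp add: fps_eq_iff fps_X_def complex_alg_zero complex_alg_one)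

lemma central_cmap: "complex_alg sc \<Longrightarrow> central (cmap sc z)"
  by (rule central_fps) (simp add: central_complex_alg)

lemma cmap_id: "cmap (\<lambda>x. x) z = z" by (simp add: fps_eq_iff)

lemma complex_alg_fps_const:
  assumes "complex_alg sc"
  shows "complex_alg (\<lambda>z. fps_const (sc z))"
  unfolding complex_alg_def
proof (intro conjI allI)
  show "fps_const (sc 1) = 1" using assms by (simp add: complex_alg_one)
  fix x y
  show "fps_const (sc (x + y)) = fps_const (sc x) + fps_const (sc y)" using assms by (simp add: complex_alg_add)
  show "fps_const (sc (x * y)) = fps_const (sc x) * fps_const (sc y)" using assms by (simp add: complex_alg_mult)
next
  fix x and a :: "'a fps"
  show "fps_const (sc x) * a = a * fps_const (sc x)"
    using assms by (simp add: fps_eq_iff complex_alg_commute)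
qed

lemma fps_subst_cmap:
  assumes sc: "complex_alg sc"
  shows "fps_subst sc G (cmap sc w) = cmap sc (fps_subst (\<lambda>x. x) G w)"
  by (simp add: fps_eq_iff fps_subst_nth complex_alg_sum[OF sc] complex_alg_mult[OF sc])

lemma fps_subst_by_X:
  assumes "complex_alg sc"
  shows "fps_subst sc fps_X f = f"
proof -
  have "fps_subst sc fps_X f $ N = f $ N" for N
  proof -
    have "fps_subst sc fps_X f $ N = (\<Sum>r\<le>N. if r = N then f $ r else 0)"
      unfolding fps_subst_nth fps_X_power_nth by (intro sum.cong refl) (simp add: complex_alg_one[OF assms] complex_alg_zero[OF assms])
    then show ?thesis by (simp add: sum.delta')
  qed
  then show ?thesis by (simp add: fps_eq_iff)
qed

lemma fps_const_sum: "fps_const (sum f A) = (\<Sum>x\<in>A. fps_const (f x :: 'b::comm_monoid_add))"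
  by (induction A rule: infinite_finite_induct) (simp_all del: fps_const_add add: fps_const_add[symmetric])

section \<open>Series in two variables\<close>

text \<open>Series in two variables are elements of \<open>'b fps fps\<close>: the outer variable \<open>fps_X\<close> stands
  for \<open>u\<^sup>-\<^sup>1\<close>, the inner one \<open>Yv\<close> for \<open>v\<^sup>-\<^sup>1\<close>. Thus \<open>U f\<close> is \<open>f(u)\<close> and \<open>V h\<close> is \<open>h(v)\<close>;
  \<open>subst_v\<close> and \<open>subst_u\<close> substitute a series for \<open>v\<^sup>-\<^sup>1\<close> and \<open>u\<^sup>-\<^sup>1\<close>, and \<open>diag\<close> sets \<open>v = u\<close>.\<close>

definition U :: "'b::ring_1 fps \<Rightarrow> 'b fps fps" where "U f = Abs_fps (\<lambda>p. fps_const (f $ p))"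

abbreviation V :: "'b::ring_1 fps \<Rightarrow> 'b fps fps" where "V h \<equiv> fps_const h"
abbreviation Yv :: "'b::ring_1 fps fps" where "Yv \<equiv> fps_const fps_X"
abbreviation Cst :: "'b::ring_1 \<Rightarrow> 'b fps fps" where "Cst z \<equiv> fps_const (fps_const z)"

lemma U_nth[simp]: "U f $ p = fps_const (f $ p)" by (simp add: U_def)

definition subst_v :: "(complex \<Rightarrow> 'b::ring_1) \<Rightarrow> complex fps \<Rightarrow> 'b fps fps \<Rightarrow> 'b fps fps" where
  "subst_v sc G F = Abs_fps (\<lambda>p. fps_subst sc G (F $ p))"

lemma subst_v_nth[simp]: "subst_v sc G F $ p = fps_subst sc G (F $ p)"
  by (simp add: subst_v_def)

lemma subst_v_add: "subst_v sc G (F + H) = subst_v sc G F + subst_v sc G H"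
  by (simp add: fps_eq_iff fps_subst_add)

lemma subst_v_diff: "subst_v sc G (F - H) = subst_v sc G F - subst_v sc G H"
  by (simp add: fps_eq_iff fps_subst_diff)

lemma subst_v_mult:
  assumes "complex_alg sc" "G $ 0 = 0"
  shows "subst_v sc G (F * H) = subst_v sc G F * subst_v sc G H"
  by (simp add: fps_eq_iff fps_mult_nth fps_subst_sum fps_subst_mult[OF assms])

lemma subst_v_U:
  assumes "complex_alg sc"
  shows "subst_v sc G (U f) = U f"
  by (simp add: fps_eq_iff fps_subst_const[OF assms])

lemma subst_v_V: "subst_v sc G (V h) = V (fps_subst sc G h)"
  by (simp add: fps_eq_iff fps_const_def fps_subst_zero)

lemma subst_v_X:
  assumes "complex_alg sc"
  shows "subst_v sc G fps_X = fps_X"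
  by (simp add: fps_eq_iff fps_X_def fps_subst_zero fps_subst_one[OF assms])

definition subst_u :: "(complex \<Rightarrow> 'b::ring_1) \<Rightarrow> complex fps \<Rightarrow> 'b fps fps \<Rightarrow> 'b fps fps" where
  "subst_u sc G F = fps_subst (\<lambda>z. fps_const (sc z)) G F"

lemma subst_u_add: "subst_u sc G (F + H) = subst_u sc G F + subst_u sc G H"
  by (simp add: subst_u_def fps_subst_add)

lemma subst_u_diff: "subst_u sc G (F - H) = subst_u sc G F - subst_u sc G H"
  by (simp add: subst_u_def fps_subst_diff)

lemma subst_u_mult:
  assumes "complex_alg sc" "G $ 0 = 0"
  shows "subst_u sc G (F * H) = subst_u sc G F * subst_u sc G H"
  unfolding subst_u_def by (rule fps_subst_mult[OF complex_alg_fps_const[OF assms(1)] assms(2)])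

lemma subst_u_V:
  assumes "complex_alg sc"
  shows "subst_u sc G (V h) = V h"
  unfolding subst_u_def by (rule fps_subst_const[OF complex_alg_fps_const[OF assms]])

lemma subst_u_U: "subst_u sc G (U f) = U (fps_subst sc G f)"
  by (simp add: fps_eq_iff subst_u_def fps_subst_nth fps_const_sum[symmetric])

definition diag :: "'b::ring_1 fps fps \<Rightarrow> 'b fps" where
  "diag F = Abs_fps (\<lambda>N. \<Sum>p\<le>N. F $ p $ (N - p))"

lemma diag_nth: "diag F $ N = (\<Sum>p\<le>N. F $ p $ (N - p))" by (simp add: diag_def)

lemma diag_add: "diag (F + H) = diag F + diag H" by (simp add: fps_eq_iff diag_nth sum.distrib)

lemma diag_diff: "diag (F - H) = diag F - diag H"
  by (simp add: fps_eq_iff diag_nth sum_subtractf)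

lemma diag_U: "diag (U f) = f"
proof -
  have "diag (U f) $ N = f $ N" for N
  proof -
    have "diag (U f) $ N = (\<Sum>p\<le>N. if p = N then f $ p else 0)"
      unfolding diag_nth by (intro sum.cong refl) auto
    then show ?thesis by (simp add: sum.delta')
  qed
  then show ?thesis by (simp add: fps_eq_iff)
qed

lemma diag_V: "diag (V h) = h"
proof -
  have "diag (V h) $ N = h $ N" for N
  proof -
    have "diag (V h) $ N = (\<Sum>p\<le>N. if p = 0 then h $ N else 0)"
      unfolding diag_nth by (intro sum.cong refl) (auto simp: fps_const_def)
    then show ?thesis by simp
  qed
  then show ?thesis by (simp add: fps_eq_iff)
qed

lemma sum_triangle_nested:
  "(\<Sum>p\<le>N. \<Sum>i\<le>p. g i (p - i)) = (\<Sum>i\<le>(N::nat). \<Sum>k\<le>N - i. g i k)"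
proof -
  have "(\<Sum>p\<le>N. \<Sum>i\<le>p. g i (p - i)) = (\<Sum>(i, k)\<in>{(i, k). i + k \<le> N}. g i k)"
    by (rule sum.triangle_reindex_eq[symmetric])
  also have "{(i, k). i + k \<le> N} = (SIGMA i:{..N}. {..N - i})" by auto
  also have "(\<Sum>(i, k)\<in>(SIGMA i:{..N}. {..N - i}). g i k) = (\<Sum>i\<le>N. \<Sum>k\<le>N - i. g i k)"
    by (rule sum.Sigma[symmetric]) auto
  finally show ?thesis .
qed

lemma sum_triangle_swap:
  "(\<Sum>a\<le>n. \<Sum>b\<le>n - a. f a b) = (\<Sum>b\<le>(n::nat). \<Sum>a\<le>n - b. f a b)"
proof -
  have "(\<Sum>a\<le>n. \<Sum>b\<le>n - a. f a b) = (\<Sum>p\<le>n. \<Sum>a\<le>p. f a (p - a))" by (rule sum_triangle_nested[symmetric])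
  also have "\<dots> = (\<Sum>p\<le>n. \<Sum>b\<le>p. f (p - b) b)"
  proof (rule sum.cong[OF refl])
    fix p
    show "(\<Sum>a\<le>p. f a (p - a)) = (\<Sum>b\<le>p. f (p - b) b)"
      by (rule sum.reindex_bij_witness[of _ "\<lambda>b. p - b" "\<lambda>a. p - a"]) auto
  qed
  also have "\<dots> = (\<Sum>b\<le>n. \<Sum>a\<le>n - b. f a b)" by (rule sum_triangle_nested)
  finally show ?thesis .
qed

lemma diag_mult: "diag (F * H) = diag F * diag (H :: 'b::ring_1 fps fps)"
proof -
  have "diag (F * H) $ N = (diag F * diag H) $ N" for N
  proof -
    have "diag (F * H) $ N = (\<Sum>p\<le>N. \<Sum>i\<le>p. \<Sum>j\<le>N - p. F $ i $ j * H $ (p - i) $ (N - p - j))"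
      unfolding diag_nth fps_mult_nth atLeast0AtMost fps_sum_nth by simp
    also have "\<dots> = (\<Sum>p\<le>N. \<Sum>i\<le>p. (\<lambda>i k. \<Sum>j\<le>N - (i + k). F $ i $ j * H $ k $ (N - (i + k) - j)) i (p - i))"
      by (intro sum.cong refl) auto
    also have "\<dots> = (\<Sum>i\<le>N. \<Sum>k\<le>N - i. \<Sum>j\<le>N - (i + k). F $ i $ j * H $ k $ (N - (i + k) - j))"
      by (rule sum_triangle_nested)
    also have "\<dots> = (\<Sum>i\<le>N. \<Sum>k\<le>N - i. \<Sum>j\<le>N - i - k. F $ i $ j * H $ k $ (N - i - j - k))"
      by (intro sum.cong refl) (simp_all add: add_ac)
    also have "\<dots> = (\<Sum>i\<le>N. \<Sum>j\<le>N - i. \<Sum>k\<le>N - i - j. F $ i $ j * H $ k $ (N - i - j - k))"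
    proof (rule sum.cong[OF refl])
      fix i
      show "(\<Sum>k\<le>N - i. \<Sum>j\<le>N - i - k. F $ i $ j * H $ k $ (N - i - j - k)) = (\<Sum>j\<le>N - i. \<Sum>k\<le>N - i - j. F $ i $ j * H $ k $ (N - i - j - k))"
        using sum_triangle_swap[where f="\<lambda>k j. F $ i $ j * H $ k $ (N - i - j - k)" and n="N - i"] by simp
    qed
    also have "\<dots> = (\<Sum>i\<le>N. \<Sum>j\<le>N - i. F $ i $ j * (\<Sum>k\<le>N - (i + j). H $ k $ (N - (i + j) - k)))"
      by (intro sum.cong refl) (simp_all add: sum_distrib_left add_ac)
    also have "\<dots> = (\<Sum>M\<le>N. \<Sum>i\<le>M. (\<lambda>i j. F $ i $ j * (\<Sum>k\<le>N - (i + j). H $ k $ (N - (i + j) - k))) i (M - i))"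
      by (rule sum_triangle_nested[symmetric])
    also have "\<dots> = (\<Sum>M\<le>N. \<Sum>i\<le>M. F $ i $ (M - i) * (\<Sum>k\<le>N - M. H $ k $ (N - M - k)))"
      by (intro sum.cong refl) auto
    also have "\<dots> = (diag F * diag H) $ N"
      unfolding fps_mult_nth diag_nth atLeast0AtMost by (simp add: sum_distrib_right)
    finally show ?thesis .
  qed
  then show ?thesis by (simp add: fps_eq_iff)
qed

definition cmap2 :: "(complex \<Rightarrow> 'b::ring_1) \<Rightarrow> complex fps fps \<Rightarrow> 'b fps fps" where
  "cmap2 sc Z = Abs_fps (\<lambda>p. cmap sc (Z $ p))"

lemma cmap2_nth[simp]: "cmap2 sc Z $ p = cmap sc (Z $ p)" by (simp add: cmap2_def)

lemma cmap_sum: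
  "complex_alg sc \<Longrightarrow> cmap sc (sum f A) = (\<Sum>x\<in>A. cmap sc (f x))"
  by (induction A rule: infinite_finite_induct) (simp_all add: cmap_zero cmap_add)

lemma cmap2_add: "complex_alg sc \<Longrightarrow> cmap2 sc (Z + W) = cmap2 sc Z + cmap2 sc W"
  by (simp add: fps_eq_iff cmap_add)

lemma cmap2_diff: "complex_alg sc \<Longrightarrow> cmap2 sc (Z - W) = cmap2 sc Z - cmap2 sc W"
  by (simp add: fps_eq_iff cmap_diff)

lemma cmap2_mult: "complex_alg sc \<Longrightarrow> cmap2 sc (Z * W) = cmap2 sc Z * cmap2 sc W"
proof -
  assume sc: "complex_alg sc"
  have "cmap sc (\<Sum>i = 0..n. Z $ i * W $ (n - i)) = (\<Sum>i = 0..n. cmap sc (Z $ i) * cmap sc (W $ (n - i)))" for n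
    by (simp add: cmap_sum[OF sc] cmap_mult[OF sc])
  then show ?thesis by (simp add: fps_eq_iff fps_mult_nth)
qed

lemma cmap2_one: "complex_alg sc \<Longrightarrow> cmap2 sc 1 = 1"
  using cmap_one[of sc] cmap_zero[of sc] by (simp add: fps_eq_iff)

lemma cmap2_X: "complex_alg sc \<Longrightarrow> cmap2 sc fps_X = fps_X"
  using cmap_one[of sc] cmap_zero[of sc] by (simp add: fps_eq_iff fps_X_def)

lemma cmap2_V: "complex_alg sc \<Longrightarrow> cmap2 sc (V h) = V (cmap sc h)"
  using cmap_zero[of sc] by (simp add: fps_eq_iff fps_const_def)

lemma central_cmap2: "complex_alg sc \<Longrightarrow> central (cmap2 sc Z)"
  by (rule central_fps) (simp add: central_cmap)

lemma cmap2_power: "complex_alg sc \<Longrightarrow> cmap2 sc (Z ^ k) = cmap2 sc Z ^ k"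
  by (induction k) (simp_all add: cmap2_one cmap2_mult)

lemma subst_v_cmap2:
  assumes sc: "complex_alg sc"
  shows "subst_v sc G (cmap2 sc Z) = cmap2 sc (subst_v (\<lambda>x. x) G Z)"
  by (simp add: fps_eq_iff fps_subst_cmap[OF sc])

lemma subst_u_cmap2:
  assumes sc: "complex_alg sc"
  shows "subst_u sc G (cmap2 sc Z) = cmap2 sc (subst_u (\<lambda>x. x) G Z)"
proof -
  have "subst_u sc G (cmap2 sc Z) $ N = cmap2 sc (subst_u (\<lambda>x. x) G Z) $ N" for N
  proof -
    have "subst_u sc G (cmap2 sc Z) $ N = (\<Sum>r\<le>N. cmap sc (Z $ r) * fps_const (sc ((G ^ r) $ N)))"
      by (simp add: subst_u_def fps_subst_nth)
    also have "\<dots> = (\<Sum>r\<le>N. cmap sc (Z $ r * fps_const ((G ^ r) $ N)))"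
      by (simp add: cmap_mult[OF sc] cmap_const[OF sc])
    also have "\<dots> = cmap sc (\<Sum>r\<le>N. Z $ r * fps_const ((G ^ r) $ N))"
      by (simp add: cmap_sum[OF sc])
    finally show ?thesis by (simp add: subst_u_def fps_subst_nth)
  qed
  then show ?thesis by (simp add: fps_eq_iff)
qed

lemma diag_cmap2:
  assumes sc: "complex_alg sc"
  shows "diag (cmap2 sc Z) = cmap sc (diag Z)"
  by (simp add: fps_eq_iff diag_nth complex_alg_sum[OF sc])

lemma U_X: "U fps_X = (fps_X :: 'b::ring_1 fps fps)"
  by (simp add: fps_eq_iff fps_X_def)

section \<open>The series \<open>\<phi>\<^sub>c\<close>\<close>

lemma fps_X_mult_shift:
  fixes f :: "'b::comm_ring_1 fps"
  assumes "f $ 0 = 0"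
  shows "fps_X * fps_shift 1 f = f"
proof (rule fps_ext)
  fix n show "(fps_X * fps_shift 1 f) $ n = f $ n" using assms by (cases n) simp_all
qed

definition phi_poly :: "complex \<Rightarrow> complex \<Rightarrow> complex fps" where
  "phi_poly \<beta> c = 1 + fps_const c * fps_X + fps_const \<beta> * fps_X ^ 2"

text \<open>\<open>G = 1/\<phi>\<^sub>c(u)\<close> as a series in \<open>x = u\<^sup>-\<^sup>1\<close>: multiplying \<open>\<phi> + \<beta>/\<phi> = u + \<beta>/u + c\<close>
  by \<open>x G\<close> gives \<open>G (1 + c x + \<beta> x\<^sup>2) = x + \<beta> x G\<^sup>2\<close>.\<close>

definition is_phi_inv :: "complex \<Rightarrow> complex \<Rightarrow> complex fps \<Rightarrow> bool" where
  "is_phi_inv \<beta> c G \<longleftrightarrow> G * phi_poly \<beta> c = fps_X + fps_const \<beta> * fps_X * G ^ 2"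

lemma is_phi_inv_0:
  assumes "is_phi_inv \<beta> c G"
  shows "G $ 0 = 0"
proof -
  have "(G * phi_poly \<beta> c) $ 0 = (fps_X + fps_const \<beta> * fps_X * G ^ 2) $ 0"
    using assms by (simp add: is_phi_inv_def)
  then show ?thesis by (simp add: phi_poly_def)
qed

lemma is_phi_inv_1:
  assumes "is_phi_inv \<beta> c G"
  shows "G $ 1 = 1"
proof -
  have G0: "G $ 0 = 0" by (rule is_phi_inv_0[OF assms])
  have "(G * phi_poly \<beta> c) $ 1 = (fps_X + fps_const \<beta> * fps_X * G ^ 2) $ 1"
    using assms by (simp add: is_phi_inv_def)
  moreover have "(G * phi_poly \<beta> c) $ 1 = G $ 1"
    using G0 by (simp add: phi_poly_def fps_mult_nth_1 algebra_simps)
  moreover have "(fps_X + fps_const \<beta> * fps_X * G ^ 2) $ 1 = 1"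
    using G0 by (simp add: mult.assoc power2_eq_square)
  ultimately show ?thesis by simp
qed

lemma is_phi_inv_exists:
  assumes b: "\<beta> \<noteq> 0"
  shows "\<exists>G. is_phi_inv \<beta> c G"
proof -
  \<comment> \<open>the root \<open>(A - \<surd>(A\<^sup>2 - 4\<beta>x\<^sup>2)) / (2\<beta>x)\<close> of \<open>\<beta> x G\<^sup>2 - A G + x = 0\<close>\<close>
  define A where "A = phi_poly \<beta> c"
  define B where "B = fps_const \<beta>"
  define D where "D = A ^ 2 - 4 * B * fps_X ^ 2"
  have D0: "D $ 0 = 1" by (simp add: D_def A_def B_def phi_poly_def power2_eq_square)
  define Sq where "Sq = fps_radical (\<lambda>_ _. 1) 2 D"
  have Sq2: "Sq ^ 2 = D"
    using power_radical[of D "\<lambda>_ _. 1" 1] D0 by (simp add: Sq_def numeral_2_eq_2)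
  have Sq0: "Sq $ 0 = 1" by (simp add: Sq_def D0)
  define N where "N = A - Sq"
  have N0: "N $ 0 = 0" using Sq0 by (simp add: N_def A_def phi_poly_def)
  define Ci where "Ci = fps_const (inverse (2 * \<beta>))"
  have hinv: "2 * B * Ci = 1"
    using b by (simp add: B_def Ci_def numeral_fps_const)
  define G where "G = Ci * fps_shift 1 N"
  have XG: "2 * B * fps_X * G = N"
  proof -
    have "2 * B * fps_X * G = (2 * B * Ci) * (fps_X * fps_shift 1 N)"
      by (simp only: G_def mult_ac)
    also have "\<dots> = N" by (simp only: hinv fps_X_mult_shift[OF N0] mult_1_left)
    finally show ?thesis .
  qed
  have "(4 * B * fps_X) * (G * A - fps_X - B * fps_X * G ^ 2) = 0"
    using XG Sq2 unfolding D_def N_def by algebra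
  moreover have "4 * B * fps_X \<noteq> 0"
  proof
    assume "4 * B * fps_X = 0"
    then have "(4 * B * fps_X) $ 1 = 0" by simp
    then show False using b by (simp add: B_def numeral_fps_const)
  qed
  ultimately have "G * A - fps_X - B * fps_X * G ^ 2 = 0" by simp
  then have "is_phi_inv \<beta> c G" by (simp add: is_phi_inv_def A_def B_def diff_eq_eq add_ac)
  then show ?thesis ..
qed

definition phi_eq :: "complex \<Rightarrow> complex \<Rightarrow> complex fps \<Rightarrow> bool" where
  "phi_eq \<beta> c p \<longleftrightarrow> p + fps_const \<beta> * fps_X * inverse (1 + fps_X * p) = fps_const \<beta> * fps_X + fps_const c"

lemma phi_eq_exists:
  assumes b: "\<beta> \<noteq> 0"
  shows "\<exists>p. phi_eq \<beta> c p"
proof -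
  obtain G where K: "is_phi_inv \<beta> c G" using is_phi_inv_exists[OF b] by blast
  define h where "h = fps_shift 1 G"
  have Xh: "fps_X * h = G" unfolding h_def by (rule fps_X_mult_shift[OF is_phi_inv_0[OF K]])
  have h0: "h $ 0 = 1" using is_phi_inv_1[OF K] by (simp add: h_def)
  define ih where "ih = inverse h"
  have hih: "h * ih = 1" unfolding ih_def by (rule inverse_mult_eq_1') (simp add: h0)
  have ih0: "(ih - 1) $ 0 = 0" using h0 by (simp add: ih_def)
  define p where "p = fps_shift 1 (ih - 1)"
  have Xp: "fps_X * p = ih - 1" unfolding p_def by (rule fps_X_mult_shift[OF ih0])
  have inv: "inverse (1 + fps_X * p) = h"
    using h0 by (simp add: Xp ih_def fps_inverse_idempotent)
  let ?B = "fps_const \<beta>" and ?C = "fps_const c"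
  have "fps_X * h * fps_X * (p + ?B * G - ?B * fps_X - ?C) = 0"
    using K Xp hih Xh unfolding is_phi_inv_def phi_poly_def by algebra
  moreover have "fps_X * h * fps_X \<noteq> (0 :: complex fps)"
    using h0 by auto
  ultimately have e: "p + ?B * G - ?B * fps_X - ?C = 0" by simp
  have "phi_eq \<beta> c p"
    unfolding phi_eq_def inv using e Xh by algebra
  then show ?thesis ..
qed

lemma phi_eq_unique:
  assumes "phi_eq \<beta> c p" "phi_eq \<beta> c q"
  shows "p = q"
proof -
  define a where "a = 1 + fps_X * p"
  define b where "b = 1 + fps_X * q"
  have a0: "a $ 0 \<noteq> 0" "b $ 0 \<noteq> 0" by (simp_all add: a_def b_def)
  define ia where "ia = inverse a"
  define ib where "ib = inverse b"
  have aia: "a * ia = 1" "b * ib = 1" using a0 inverse_mult_eq_1' by (simp_all add: ia_def ib_def)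
  let ?B = "fps_const \<beta>" and ?C = "fps_const c"
  have e: "p + ?B * fps_X * ia = ?B * fps_X + ?C" "q + ?B * fps_X * ib = ?B * fps_X + ?C"
    using assms by (simp_all add: phi_eq_def ia_def ib_def a_def b_def)
  have "(p - q) * (a * b - ?B * fps_X ^ 2) = 0"
    using e aia unfolding a_def b_def by algebra
  moreover have "a * b - ?B * fps_X ^ 2 \<noteq> 0"
  proof
    assume "a * b - ?B * fps_X ^ 2 = 0"
    then have "(a * b - ?B * fps_X ^ 2) $ 0 = 0" by simp
    then show False by (simp add: a_def b_def power2_eq_square)
  qed
  ultimately show ?thesis by simp
qed

lemma phi_tail_eq:
  assumes "\<beta> \<noteq> 0"
  shows "phi_eq \<beta> c (phi_tail \<beta> c)"
proof -
  have "\<exists>!p. phi_eq \<beta> c p" using phi_eq_exists[OF assms] phi_eq_unique by blast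
  then have "phi_eq \<beta> c (THE p. phi_eq \<beta> c p)" by (rule theI')
  then show ?thesis by (simp add: phi_tail_def phi_eq_def)
qed

lemma is_phi_inv_phi_inv:
  assumes "\<beta> \<noteq> 0"
  shows "is_phi_inv \<beta> c (phi_inv \<beta> c)"
proof -
  define P where "P = phi_tail \<beta> c"
  define a where "a = 1 + fps_X * P"
  define ia where "ia = inverse a"
  have aia: "a * ia = 1" unfolding ia_def by (rule inverse_mult_eq_1') (simp add: a_def)
  have e: "P + fps_const \<beta> * fps_X * ia = fps_const \<beta> * fps_X + fps_const c"
    using phi_tail_eq[OF assms, of c] by (simp add: phi_eq_def P_def ia_def a_def)
  have G: "phi_inv \<beta> c = fps_X * ia" by (simp add: phi_inv_def ia_def a_def P_def)
  show ?thesis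
    unfolding is_phi_inv_def phi_poly_def G using e aia unfolding a_def by algebra
qed

text \<open>\<open>OY_factor \<beta> c\<close> is \<open>(u + \<beta>/u - v - \<beta>/v - c) u\<^sup>-\<^sup>1 v\<^sup>-\<^sup>1\<close>.\<close>

definition OY_factor :: "complex \<Rightarrow> complex \<Rightarrow> complex fps fps" where
  "OY_factor \<beta> c = Yv - fps_X - Cst c * fps_X * Yv - Cst \<beta> * fps_X * Yv ^ 2 + Cst \<beta> * fps_X ^ 2 * Yv"

lemma cmap2_Cst: "complex_alg sc \<Longrightarrow> cmap2 sc (Cst z) = Cst (sc z)"
  using cmap2_V[of sc "fps_const z"] cmap_const[of sc z] by simp

lemma cmap2_Yv: "complex_alg sc \<Longrightarrow> cmap2 sc Yv = Yv"
  using cmap2_V[of sc fps_X] cmap_X[of sc] by simp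

lemma cmap2_OY_factor:
  assumes sc: "complex_alg sc"
  shows "cmap2 sc (OY_factor \<beta> c) = Yv - fps_X - Cst (sc c) * fps_X * Yv - Cst (sc \<beta>) * fps_X * Yv ^ 2 + Cst (sc \<beta>) * fps_X ^ 2 * Yv"
  unfolding OY_factor_def
  by (simp add: cmap2_add[OF sc] cmap2_diff[OF sc] cmap2_mult[OF sc] cmap2_power[OF sc] cmap2_Cst[OF sc] cmap2_Yv[OF sc] cmap2_X[OF sc] del: fps_const_power)

lemma Yv_mult_nth: "(Yv * F) $ p $ q = (if q = 0 then 0 else F $ p $ (q - 1))"
  by simp

lemma Cst_mult_nth: "(Cst z * F) $ p $ q = z * F $ p $ q"
  by simp

lemma OY_factor_mult_nth:
  assumes sc: "complex_alg sc"
  shows "(cmap2 sc (OY_factor \<beta> c) * F) $ p $ q =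
    (if 1 \<le> q then F $ p $ (q - 1) else 0) - (if 1 \<le> p then F $ (p - 1) $ q else 0)
    - sc c * (if 1 \<le> p \<and> 1 \<le> q then F $ (p - 1) $ (q - 1) else 0)
    - sc \<beta> * (if 1 \<le> p \<and> 2 \<le> q then F $ (p - 1) $ (q - 2) else 0)
    + sc \<beta> * (if 2 \<le> p \<and> 1 \<le> q then F $ (p - 2) $ (q - 1) else 0)"
proof -
  have e: "cmap2 sc (OY_factor \<beta> c) * F = Yv * F - fps_X * F - Cst (sc c) * (fps_X * (Yv * F))
      - Cst (sc \<beta>) * (fps_X * (Yv * (Yv * F))) + Cst (sc \<beta>) * (fps_X * (fps_X * (Yv * F)))"
    unfolding cmap2_OY_factor[OF sc] by (simp add: algebra_simps power2_eq_square del: fps_const_power fps_const_mult)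
  show ?thesis unfolding e
    by (simp only: fps_add_nth fps_sub_nth Cst_mult_nth fps_X_mult_nth Yv_mult_nth) (auto simp: diff_diff_left numeral_2_eq_2)
qed

definition fps2 :: "(nat \<Rightarrow> nat \<Rightarrow> 'b::ring_1) \<Rightarrow> 'b fps fps" where
  "fps2 D = Abs_fps (\<lambda>p. Abs_fps (\<lambda>q. D p q))"

lemma fps2_nth[simp]: "fps2 D $ p $ q = D p q" by (simp add: fps2_def)

lemma zext_diff:
  "zext D (int p - int i) (int q - int j) = (if p < i \<or> q < j then 0 else D (p - i) (q - j))"
  by (simp add: zext_def nat_diff_distrib)

lemma OY_factor_mult_fps2_nth:
  assumes sc: "complex_alg sc"
  shows "(cmap2 sc (OY_factor \<beta> 0) * fps2 D) $ p $ q = factor_coeff sc \<beta> D (int p - 1) (int q - 1)"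
proof -
  have z: "zext D (int p - 1 + 1) (int q - 1) = (if q < 1 then 0 else D p (q - 1))"
    "zext D (int p - 1 - 1) (int q - 1) = (if p < 2 \<or> q < 1 then 0 else D (p - 2) (q - 1))"
    "zext D (int p - 1) (int q - 1 + 1) = (if p < 1 then 0 else D (p - 1) q)"
    "zext D (int p - 1) (int q - 1 - 1) = (if p < 1 \<or> q < 2 then 0 else D (p - 1) (q - 2))"
    using zext_diff[of D p 0 q 1] zext_diff[of D p 2 q 1] zext_diff[of D p 1 q 0] zext_diff[of D p 1 q 2]
    by (simp_all add: algebra_simps)
  show ?thesis
    unfolding OY_factor_mult_nth[OF sc] factor_coeff_def z using complex_alg_zero[OF sc]
    by (auto simp: algebra_simps)
qed

lemma XY_mult_fps2_nth: "(fps_X * (Yv * fps2 D)) $ p $ q = zext D (int p - 1) (int q - 1)"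
  using zext_diff[of D p 1 q 1] by simp

text \<open>Multiplying by \<open>u\<^sup>-\<^sup>1 v\<^sup>-\<^sup>1\<close> shifts all exponents by one; this is why the coefficient
  identities of \<open>Defs\<close> are indexed by integers \<open>r, s \<ge> -1\<close>.\<close>

lemma factor_coeff_eq_zext_iff:
  assumes sc: "complex_alg sc"
  shows "(\<forall>r s. factor_coeff sc \<beta> D r s = zext D' r s) \<longleftrightarrow>
    cmap2 sc (OY_factor \<beta> 0) * fps2 D = fps_X * (Yv * fps2 D')"
proof
  assume h: "\<forall>r s. factor_coeff sc \<beta> D r s = zext D' r s"
  show "cmap2 sc (OY_factor \<beta> 0) * fps2 D = fps_X * (Yv * fps2 D')"
    by (intro fps_ext) (simp only: OY_factor_mult_fps2_nth[OF sc] XY_mult_fps2_nth h)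
next
  assume h: "cmap2 sc (OY_factor \<beta> 0) * fps2 D = fps_X * (Yv * fps2 D')"
  show "\<forall>r s. factor_coeff sc \<beta> D r s = zext D' r s"
  proof (intro allI)
    fix r s :: int
    show "factor_coeff sc \<beta> D r s = zext D' r s"
    proof (cases "r \<ge> -1 \<and> s \<ge> -1")
      case True
      then have rs: "r = int (nat (r + 1)) - 1" "s = int (nat (s + 1)) - 1" by simp_all
      show ?thesis
        using OY_factor_mult_fps2_nth[OF sc, of \<beta> D "nat (r + 1)" "nat (s + 1)"]
          XY_mult_fps2_nth[of D' "nat (r + 1)" "nat (s + 1)"] h
        unfolding rs[symmetric] by simp
    next
      case False
      then show ?thesis using complex_alg_zero[OF sc] by (auto simp: factor_coeff_def zext_def)
    qed
  qed
qed

lemma Tser_nth: "Tser t i j $ p = Tc t p i j" by (simp add: Tser_def)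

lemma OY_rel_series:
  assumes sc: "complex_alg sc" and OY: "OY_rel sc \<beta> n t"
  and ijkl: "i \<in> {1..n}" "j \<in> {1..n}" "k \<in> {1..n}" "l \<in> {1..n}"
  shows "cmap2 sc (OY_factor \<beta> 0) * (U (Tser t i j) * V (Tser t k l) - V (Tser t k l) * U (Tser t i j))
    = fps_X * (Yv * (U (Tser t k j) * V (Tser t i l) - V (Tser t k j) * U (Tser t i l)))"
proof -
  have h: "\<forall>r s. factor_coeff sc \<beta> (\<lambda>p q. commutator (Tc t p i j) (Tc t q k l)) r s
     = zext (\<lambda>p q. Tc t p k j * Tc t q i l - Tc t q k j * Tc t p i l) r s"
    using OY ijkl unfolding OY_rel_def by blast
  have m1: "fps2 (\<lambda>p q. commutator (Tc t p i j) (Tc t q k l)) = U (Tser t i j) * V (Tser t k l) - V (Tser t k l) * U (Tser t i j)"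
    by (intro fps_ext) (simp add: commutator_def Tser_nth)
  have m2: "fps2 (\<lambda>p q. Tc t p k j * Tc t q i l - Tc t q k j * Tc t p i l) = U (Tser t k j) * V (Tser t i l) - V (Tser t k j) * U (Tser t i l)"
    by (intro fps_ext) (simp add: Tser_nth)
  show ?thesis using h unfolding factor_coeff_eq_zext_iff[OF sc] m1 m2 .
qed

lemma fps_X_mult_eq_0D: "fps_X * (w :: 'b::ring_1 fps) = 0 \<Longrightarrow> w = 0"
proof -
  assume h: "fps_X * w = 0"
  have "w $ n = 0" for n using arg_cong[OF h, of "\<lambda>f. f $ Suc n"] by simp
  then show ?thesis by (simp add: fps_eq_iff)
qed

lemma Yv_mult_eq_0D: "Yv * (W :: 'b::ring_1 fps fps) = 0 \<Longrightarrow> W = 0"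
proof -
  assume h: "Yv * W = 0"
  have "W $ p = 0" for p
  proof -
    have "fps_X * W $ p = 0" using arg_cong[OF h, of "\<lambda>f. f $ p"] by simp
    then show ?thesis by (rule fps_X_mult_eq_0D)
  qed
  then show ?thesis by (simp add: fps_eq_iff)
qed

lemma cmap_mult_eq_0D:
  assumes sc: "complex_alg sc" and G0: "G $ 0 = 0" and G1: "G $ 1 = 1"
  and h: "cmap sc G * z = 0" shows "z = 0"
proof -
  define g where "g = fps_shift 1 G"
  have Xg: "fps_X * g = G" unfolding g_def by (rule fps_X_mult_shift[OF G0])
  have g0: "g $ 0 = 1" using G1 by (simp add: g_def)
  have gi: "inverse g * g = 1" using g0 by (simp add: inverse_mult_eq_1)
  have "fps_X * (cmap sc g * z) = 0"
    using h unfolding Xg[symmetric] cmap_mult[OF sc] cmap_X[OF sc] by (simp add: mult.assoc)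
  then have "cmap sc g * z = 0" by (rule fps_X_mult_eq_0D)
  then have "cmap sc (inverse g) * (cmap sc g * z) = 0" by simp
  then show ?thesis by (simp add: mult.assoc[symmetric] cmap_mult[OF sc, symmetric] gi cmap_one[OF sc])
qed

lemma cmap2_mult_eq_0D:
  assumes sc: "complex_alg sc" and G0: "G $ 0 = 0" and G1: "G $ 1 = 1"
  and h: "cmap2 sc (V G) * Z = 0" shows "Z = 0"
proof -
  define g where "g = fps_shift 1 G"
  have Xg: "fps_X * g = G" unfolding g_def by (rule fps_X_mult_shift[OF G0])
  have g0: "g $ 0 = 1" using G1 by (simp add: g_def)
  have gi: "inverse g * g = 1" using g0 by (simp add: inverse_mult_eq_1)
  have e: "cmap2 sc (V G) = Yv * cmap2 sc (V g)"
  proof -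
    have "V (fps_X * g) = Yv * V g" by simp
    then show ?thesis unfolding Xg[symmetric] by (simp only: cmap2_mult[OF sc] cmap2_Yv[OF sc])
  qed
  have "Yv * (cmap2 sc (V g) * Z) = 0" using h unfolding e by (simp add: mult.assoc)
  then have "cmap2 sc (V g) * Z = 0" by (rule Yv_mult_eq_0D)
  then have "cmap2 sc (V (inverse g)) * (cmap2 sc (V g) * Z) = 0" by simp
  then have "cmap2 sc (V (inverse g) * V g) * Z = 0" by (simp only: mult.assoc[symmetric] cmap2_mult[OF sc, symmetric])
  moreover have "V (inverse g) * V g = 1" using gi by simp
  ultimately show ?thesis by (simp add: cmap2_one[OF sc])
qed

lemma OY_factor_mult_eq_0D:
  assumes sc: "complex_alg sc" and h: "cmap2 sc (OY_factor \<beta> c) * F = 0"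
  shows "F = 0"
proof -
  have z: "(cmap2 sc (OY_factor \<beta> c) * F) $ p $ q = 0" for p q using h by simp
  have "\<forall>q. F $ p $ q = 0" for p
  proof (induction p rule: less_induct)
    case (less p)
    show ?case
    proof
      fix q
      have "(cmap2 sc (OY_factor \<beta> c) * F) $ p $ Suc q = 0" by (rule z)
      then show "F $ p $ q = 0" unfolding OY_factor_mult_nth[OF sc] using less by (auto split: if_splits)
    qed
  qed
  then show ?thesis by (simp add: fps_eq_iff)
qed

lemma subst_v_one: "complex_alg sc \<Longrightarrow> subst_v sc G 1 = 1"
  by (simp add: fps_eq_iff fps_subst_one fps_subst_zero)

lemma subst_v_power:
  "complex_alg sc \<Longrightarrow> G $ 0 = 0 \<Longrightarrow> subst_v sc G (F ^ k) = subst_v sc G F ^ k"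
  by (induction k) (simp_all add: subst_v_one subst_v_mult)

lemma subst_v_Cst: "complex_alg sc \<Longrightarrow> subst_v sc G (Cst z) = Cst z"
  by (simp add: subst_v_V fps_subst_const)

lemma subst_v_Yv:
  "complex_alg sc \<Longrightarrow> G $ 0 = 0 \<Longrightarrow> subst_v sc G Yv = V (cmap sc G)"
  by (simp add: subst_v_V fps_subst_X)

lemma subst_v_OY_factor:
  assumes G0: "G $ 0 = 0"
  shows "subst_v (\<lambda>x. x) G (OY_factor \<beta> 0) = V G - fps_X - Cst \<beta> * fps_X * (V G) ^ 2 + Cst \<beta> * fps_X ^ 2 * V G"
  unfolding OY_factor_def
  by (simp add: subst_v_add subst_v_diff subst_v_mult[OF complex_alg_id G0] subst_v_power[OF complex_alg_id G0] subst_v_Cst[OF complex_alg_id] subst_v_Yv[OF complex_alg_id G0]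
      subst_v_X[OF complex_alg_id] cmap_id del: fps_const_power fps_const_mult)

lemma is_phi_inv_V:
  assumes K: "is_phi_inv \<beta> c G"
  shows "V G * (1 + Cst c * Yv + Cst \<beta> * Yv ^ 2) = Yv + Cst \<beta> * Yv * (V G) ^ 2"
proof -
  have "fps_const (G * phi_poly \<beta> c) = fps_const (fps_X + fps_const \<beta> * fps_X * G ^ 2)"
    using K unfolding is_phi_inv_def by simp
  then show ?thesis
    by (simp only: phi_poly_def fps_const_add[symmetric] fps_const_mult[symmetric] fps_const_power[symmetric] fps_const_1_eq_1)
qed

text \<open>Substituting \<open>1/\<phi>_c(v)\<close> for \<open>v\<^sup>-\<^sup>1\<close> turns \<open>OY_factor \<beta> 0\<close> into \<open>OY_factor \<beta> c\<close>, up to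
  the invertible factor \<open>v/\<phi>_c(v)\<close>.\<close>

lemma OY_factor_subst_v_identity:
  assumes K: "is_phi_inv \<beta> c G"
  shows "Yv * (V G - fps_X - Cst \<beta> * fps_X * (V G) ^ 2 + Cst \<beta> * fps_X ^ 2 * V G) = V G * OY_factor \<beta> c"
  using is_phi_inv_V[OF K] unfolding OY_factor_def by algebra

lemma OY_rel_subst_v:
  assumes sc: "complex_alg sc" and OY: "OY_rel sc \<beta> n t" and K: "is_phi_inv \<beta> c G"
  and ijkl: "i \<in> {1..n}" "j \<in> {1..n}" "k \<in> {1..n}" "l \<in> {1..n}"
  shows "cmap2 sc (OY_factor \<beta> c) * (U (Tser t i j) * V (fps_subst sc G (Tser t k l)) - V (fps_subst sc G (Tser t k l)) * U (Tser t i j))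
    = fps_X * (Yv * (U (Tser t k j) * V (fps_subst sc G (Tser t i l)) - V (fps_subst sc G (Tser t k j)) * U (Tser t i l)))"
proof -
  have G0: "G $ 0 = 0" by (rule is_phi_inv_0[OF K])
  have G1: "G $ 1 = 1" by (rule is_phi_inv_1[OF K])
  let ?C = "U (Tser t i j) * V (Tser t k l) - V (Tser t k l) * U (Tser t i j)"
  let ?R = "U (Tser t k j) * V (Tser t i l) - V (Tser t k j) * U (Tser t i l)"
  let ?SC = "U (Tser t i j) * V (fps_subst sc G (Tser t k l)) - V (fps_subst sc G (Tser t k l)) * U (Tser t i j)"
  let ?SR = "U (Tser t k j) * V (fps_subst sc G (Tser t i l)) - V (fps_subst sc G (Tser t k j)) * U (Tser t i l)"
  have XY: "fps_X * (Yv * W) = cmap2 sc (fps_X * Yv) * W" for W :: "'a fps fps"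
    by (simp add: cmap2_mult[OF sc] cmap2_X[OF sc] cmap2_Yv[OF sc] mult.assoc del: fps_const_mult)
  have O: "cmap2 sc (OY_factor \<beta> 0) * ?C = cmap2 sc (fps_X * Yv) * ?R"
    using OY_rel_series[OF sc OY ijkl] unfolding XY .
  have SC: "subst_v sc G ?C = ?SC" and SR: "subst_v sc G ?R = ?SR"
    by (simp_all add: subst_v_diff subst_v_mult[OF sc G0] subst_v_U[OF sc] subst_v_V)
  have "subst_v sc G (cmap2 sc (OY_factor \<beta> 0) * ?C) = subst_v sc G (cmap2 sc (fps_X * Yv) * ?R)" using O by simp
  then have O2: "cmap2 sc (subst_v (\<lambda>x. x) G (OY_factor \<beta> 0)) * ?SC = cmap2 sc (subst_v (\<lambda>x. x) G (fps_X * Yv)) * ?SR"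
    by (simp only: subst_v_mult[OF sc G0] subst_v_cmap2[OF sc] SC SR)
  have SXY: "subst_v (\<lambda>x. x) G (fps_X * Yv) = fps_X * V G"
    by (simp add: subst_v_mult[OF complex_alg_id G0] subst_v_X[OF complex_alg_id] subst_v_Yv[OF complex_alg_id G0] cmap_id del: fps_const_mult)
  have "cmap2 sc Yv * (cmap2 sc (subst_v (\<lambda>x. x) G (OY_factor \<beta> 0)) * ?SC) = cmap2 sc Yv * (cmap2 sc (subst_v (\<lambda>x. x) G (fps_X * Yv)) * ?SR)"
    using O2 by simp
  then have "cmap2 sc (Yv * subst_v (\<lambda>x. x) G (OY_factor \<beta> 0)) * ?SC = cmap2 sc (Yv * (fps_X * V G)) * ?SR"
    by (simp only: mult.assoc[symmetric] cmap2_mult[OF sc, symmetric] SXY)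
  moreover have "Yv * subst_v (\<lambda>x. x) G (OY_factor \<beta> 0) = V G * OY_factor \<beta> c"
    unfolding subst_v_OY_factor[OF G0] by (rule OY_factor_subst_v_identity[OF K])
  moreover have "Yv * (fps_X * V G) = V G * (fps_X * Yv)" by (simp only: mult_ac)
  ultimately have "cmap2 sc (V G) * (cmap2 sc (OY_factor \<beta> c) * ?SC - cmap2 sc (fps_X * Yv) * ?SR) = 0"
    by (simp add: cmap2_mult[OF sc] mult.assoc right_diff_distrib del: fps_const_mult)
  then have "cmap2 sc (OY_factor \<beta> c) * ?SC - cmap2 sc (fps_X * Yv) * ?SR = 0"
    by (rule cmap2_mult_eq_0D[OF sc G0 G1])
  then show ?thesis unfolding XY by simp
qed

lemma subst_u_one: "complex_alg sc \<Longrightarrow> subst_u sc G 1 = 1"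
  unfolding subst_u_def by (rule fps_subst_one[OF complex_alg_fps_const])

lemma subst_u_power:
  "complex_alg sc \<Longrightarrow> G $ 0 = 0 \<Longrightarrow> subst_u sc G (F ^ k) = subst_u sc G F ^ k"
  by (induction k) (simp_all add: subst_u_one subst_u_mult)

lemma subst_u_X:
  assumes sc: "complex_alg sc" and G0: "G $ 0 = 0"
  shows "subst_u sc G fps_X = U (cmap sc G)"
proof -
  have "subst_u sc G (U fps_X) = U (cmap sc G)" by (simp only: subst_u_U fps_subst_X[OF sc G0])
  then show ?thesis by (simp only: U_X)
qed

lemma diag_one: "diag 1 = 1"
  using diag_V[of 1] by simp

lemma diag_power: "diag (F ^ k) = diag F ^ k"
  by (induction k) (simp_all add: diag_one diag_mult)

lemma subst_u_Cst: "complex_alg sc \<Longrightarrow> subst_u sc G (Cst z) = Cst z"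
  by (rule subst_u_V)

lemma diag_subst_OY_factor:
  assumes G10: "G1 $ 0 = 0" and G20: "G2 $ 0 = 0"
  shows "diag (subst_u (\<lambda>x. x) G1 (subst_v (\<lambda>x. x) G2 (OY_factor \<beta> 0))) = G2 - G1 - fps_const \<beta> * G1 * G2 ^ 2 + fps_const \<beta> * G1 ^ 2 * G2"
  unfolding subst_v_OY_factor[OF G20]
  by (simp add: subst_u_add subst_u_diff subst_u_mult[OF complex_alg_id G10] subst_u_power[OF complex_alg_id G10] subst_u_Cst[OF complex_alg_id] subst_u_V[OF complex_alg_id]
      subst_u_X[OF complex_alg_id G10] cmap_id diag_add diag_diff diag_mult diag_power diag_U diag_V del: fps_const_power fps_const_mult)

lemma diag_subst_XY:
  assumes G10: "G1 $ 0 = 0" and G20: "G2 $ 0 = 0"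
  shows "diag (subst_u (\<lambda>x. x) G1 (subst_v (\<lambda>x. x) G2 (fps_X * Yv))) = G1 * G2"
  by (simp add: subst_v_mult[OF complex_alg_id G20] subst_v_X[OF complex_alg_id] subst_v_Yv[OF complex_alg_id G20] subst_u_mult[OF complex_alg_id G10] subst_u_V[OF complex_alg_id]
      subst_u_X[OF complex_alg_id G10] cmap_id diag_mult diag_U diag_V del: fps_const_mult)

text \<open>Substituting \<open>1/\<phi>_c(w)\<close> for \<open>u\<^sup>-\<^sup>1\<close> and \<open>1/\<phi>_(c-1)(w)\<close> for \<open>v\<^sup>-\<^sup>1\<close> turns
  \<open>OY_factor \<beta> 0\<close> into the image \<open>G1 G2\<close> of \<open>u\<^sup>-\<^sup>1 v\<^sup>-\<^sup>1\<close>: the scalar factor becomes \<open>1\<close>.\<close>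

lemma OY_factor_fused_identity:
  assumes K1: "is_phi_inv \<beta> c G1" and K2: "is_phi_inv \<beta> (c - 1) G2"
  shows "G2 - G1 - fps_const \<beta> * G1 * G2 ^ 2 + fps_const \<beta> * G1 ^ 2 * G2 = G1 * G2"
proof -
  have c1: "fps_const (c - 1) = fps_const c - 1" by (metis fps_const_1_eq_1 fps_const_sub)
  have "fps_X * ((G2 - G1 - fps_const \<beta> * G1 * G2 ^ 2 + fps_const \<beta> * G1 ^ 2 * G2) - G1 * G2) = 0"
    using K1 K2 c1 unfolding is_phi_inv_def phi_poly_def by algebra
  then show ?thesis by simp
qed

lemma OY_rel_fused:
  assumes sc: "complex_alg sc" and OY: "OY_rel sc \<beta> n t" and K1: "is_phi_inv \<beta> c G1" and K2: "is_phi_inv \<beta> (c - 1) G2"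
  and xyzw: "x \<in> {1..n}" "y \<in> {1..n}" "z \<in> {1..n}" "w \<in> {1..n}"
  shows "fps_subst sc G1 (Tser t x y) * fps_subst sc G2 (Tser t z w) - fps_subst sc G2 (Tser t z w) * fps_subst sc G1 (Tser t x y)
    = fps_subst sc G1 (Tser t z y) * fps_subst sc G2 (Tser t x w) - fps_subst sc G2 (Tser t z y) * fps_subst sc G1 (Tser t x w)"
proof -
  have G10: "G1 $ 0 = 0" by (rule is_phi_inv_0[OF K1])
  have G11: "G1 $ 1 = 1" by (rule is_phi_inv_1[OF K1])
  have G20: "G2 $ 0 = 0" by (rule is_phi_inv_0[OF K2])
  have G21: "G2 $ 1 = 1" by (rule is_phi_inv_1[OF K2])
  define \<Delta> where "\<Delta> = (\<lambda>F :: 'a fps fps. diag (subst_u sc G1 (subst_v sc G2 F)))"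
  have Dm: "\<Delta> (A * B) = \<Delta> A * \<Delta> B" for A B
    unfolding \<Delta>_def by (simp add: subst_v_mult[OF sc G20] subst_u_mult[OF sc G10] diag_mult)
  have Dd: "\<Delta> (A - B) = \<Delta> A - \<Delta> B" for A B
    unfolding \<Delta>_def by (simp add: subst_v_diff subst_u_diff diag_diff)
  have DU: "\<Delta> (U f) = fps_subst sc G1 f" for f
    unfolding \<Delta>_def by (simp add: subst_v_U[OF sc] subst_u_U diag_U)
  have DV: "\<Delta> (V h) = fps_subst sc G2 h" for h
    unfolding \<Delta>_def by (simp add: subst_v_V subst_u_V[OF sc] diag_V)
  have Ds: "\<Delta> (cmap2 sc Z) = cmap sc (diag (subst_u (\<lambda>x. x) G1 (subst_v (\<lambda>x. x) G2 Z)))" for Z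
    unfolding \<Delta>_def by (simp add: subst_v_cmap2[OF sc] subst_u_cmap2[OF sc] diag_cmap2[OF sc])
  have XY: "fps_X * (Yv * W) = cmap2 sc (fps_X * Yv) * W" for W :: "'a fps fps"
    by (simp add: cmap2_mult[OF sc] cmap2_X[OF sc] cmap2_Yv[OF sc] mult.assoc del: fps_const_mult)
  let ?C = "U (Tser t x y) * V (Tser t z w) - V (Tser t z w) * U (Tser t x y)"
  let ?R = "U (Tser t z y) * V (Tser t x w) - V (Tser t z y) * U (Tser t x w)"
  have O: "cmap2 sc (OY_factor \<beta> 0) * ?C = cmap2 sc (fps_X * Yv) * ?R"
    using OY_rel_series[OF sc OY xyzw] unfolding XY .
  then have "\<Delta> (cmap2 sc (OY_factor \<beta> 0) * ?C) = \<Delta> (cmap2 sc (fps_X * Yv) * ?R)" by simp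
  then have "cmap sc (G1 * G2) * \<Delta> ?C = cmap sc (G1 * G2) * \<Delta> ?R"
    unfolding Dm Ds diag_subst_OY_factor[OF G10 G20] diag_subst_XY[OF G10 G20] OY_factor_fused_identity[OF K1 K2] .
  then have "cmap sc G1 * (cmap sc G2 * (\<Delta> ?C - \<Delta> ?R)) = 0"
    by (simp add: cmap_mult[OF sc] mult.assoc right_diff_distrib)
  then have "cmap sc G2 * (\<Delta> ?C - \<Delta> ?R) = 0" by (rule cmap_mult_eq_0D[OF sc G10 G11])
  then have "\<Delta> ?C - \<Delta> ?R = 0" by (rule cmap_mult_eq_0D[OF sc G20 G21])
  then show ?thesis unfolding Dd Dm DU DV by simp
qed

lemma V_prod_list: "V (prod_list (map g xs)) = prod_list (map (\<lambda>x. V (g x)) xs)"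
  by (induction xs) (simp_all del: fps_const_mult add: fps_const_mult[symmetric])

lemma minor_fps_const: "minor (\<lambda>j x y. V (f j x y)) m c d = V (minor f m c d)"
proof -
  have "V (minor f m c d) = (\<Sum>\<sigma>\<in>{\<sigma>. \<sigma> permutes {1..m}}. V (of_int (sign \<sigma>) * seg_prod f 1 m (c \<circ> \<sigma>) d))"
    by (simp only: minor_def fps_const_sum)
  also have "\<dots> = minor (\<lambda>j x y. V (f j x y)) m c d"
    unfolding minor_def
  proof (rule sum.cong[OF refl])
    fix \<sigma>
    have "V (seg_prod f 1 m (c \<circ> \<sigma>) d) = seg_prod (\<lambda>j x y. V (f j x y)) 1 m (c \<circ> \<sigma>) d"
      unfolding seg_prod_def by (rule V_prod_list)
    then show "V (of_int (sign \<sigma>) * seg_prod f 1 m (c \<circ> \<sigma>) d) = of_int (sign \<sigma>) * seg_prod (\<lambda>j x y. V (f j x y)) 1 m (c \<circ> \<sigma>) d"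
      by (simp only: fps_const_mult[symmetric] fps_of_int)
  qed
  finally show ?thesis by simp
qed

lemma PiE_fiber_permutes:
  assumes p: "p permutes {1..m}" and c: "\<forall>i\<in>{1..m}. c i \<in> A"
  shows "{a \<in> PiE {1..m} (\<lambda>_. A). \<forall>i\<in>{1..m}. c i = a (p i)} = {restrict (c \<circ> inv p) {1..m}}"
proof (intro equalityI subsetI)
  fix a assume a: "a \<in> {a \<in> PiE {1..m} (\<lambda>_. A). \<forall>i\<in>{1..m}. c i = a (p i)}"
  have "a j = restrict (c \<circ> inv p) {1..m} j" for j
  proof (cases "j \<in> {1..m}")
    case True
    then have "inv p j \<in> {1..m}" using permutes_in_image[OF permutes_inv[OF p]] by simp
    then have "c (inv p j) = a (p (inv p j))" using a by auto
    then show ?thesis using True permutes_inverses(1)[OF p] by simp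
  next
    case False
    then show ?thesis using a by (auto simp: PiE_def extensional_def)
  qed
  then show "a \<in> {restrict (c \<circ> inv p) {1..m}}" by auto
next
  fix a assume "a \<in> {restrict (c \<circ> inv p) {1..m}}"
  then have a: "a = restrict (c \<circ> inv p) {1..m}" by simp
  have "a \<in> PiE {1..m} (\<lambda>_. A)"
    unfolding a using c permutes_in_image[OF permutes_inv[OF p]] by (auto simp: PiE_def)
  moreover have "\<forall>i\<in>{1..m}. c i = a (p i)"
    unfolding a using permutes_in_image[OF p] permutes_inverses(2)[OF p] by auto
  ultimately show "a \<in> {a \<in> PiE {1..m} (\<lambda>_. A). \<forall>i\<in>{1..m}. c i = a (p i)}" by simp
qed

text \<open>The antisymmetriser, summed over index tuples, only sees the tuples \<open>c \<circ> inv p\<close>.\<close>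

lemma qminor_eq_minor:
  assumes c: "\<forall>i\<in>{1..m}. c i \<in> {1..n}"
  shows "qminor sc \<beta> n t m c d = minor (Tfac sc \<beta> t) m c d"
proof -
  let ?P = "{p. p permutes {1..m}}"
  let ?A = "PiE {1..m} (\<lambda>_. {1..n})"
  let ?g = "\<lambda>a p. of_int (sign p) * seg_prod (Tfac sc \<beta> t) 1 m a d"
  have fin: "finite ?A" "finite ?P" by (auto intro: finite_PiE finite_permutations)
  have pl: "prod_list (map (\<lambda>i. Tfac sc \<beta> t i (a i) (d i)) [1..<m+1]) = seg_prod (Tfac sc \<beta> t) 1 m a d" for a
    by (simp add: seg_prod_def)
  have sets: "{p. p permutes {1..m} \<and> (\<forall>i\<in>{1..m}. c i = a (p i))} = {p \<in> ?P. \<forall>i\<in>{1..m}. c i = a (p i)}" for a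
    by auto
  have "qminor sc \<beta> n t m c d = (\<Sum>a\<in>?A. \<Sum>p\<in>{p \<in> ?P. \<forall>i\<in>{1..m}. c i = a (p i)}. ?g a p)"
    by (simp only: qminor_def antisym_entry_def pl sets of_int_sum fps_const_sum fps_of_int sum_distrib_right)
  also have "\<dots> = (\<Sum>p\<in>?P. \<Sum>a\<in>{a \<in> ?A. \<forall>i\<in>{1..m}. c i = a (p i)}. ?g a p)"
    by (rule sum.swap_restrict[OF fin])
  also have "\<dots> = (\<Sum>p\<in>?P. of_int (sign (inv p)) * seg_prod (Tfac sc \<beta> t) 1 m (c \<circ> inv p) d)"
  proof (rule sum.cong[OF refl])
    fix p assume "p \<in> ?P"
    then have p: "p permutes {1..m}" by simp
    have "seg_prod (Tfac sc \<beta> t) 1 m (restrict (c \<circ> inv p) {1..m}) d = seg_prod (Tfac sc \<beta> t) 1 m (c \<circ> inv p) d"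
      by (rule seg_prod_cong) auto
    moreover have "sign (inv p) = sign p"
      by (rule sign_inverse) (rule permutes_imp_permutation[OF _ p], simp)
    ultimately show "(\<Sum>a\<in>{a \<in> ?A. \<forall>i\<in>{1..m}. c i = a (p i)}. ?g a p)
        = of_int (sign (inv p)) * seg_prod (Tfac sc \<beta> t) 1 m (c \<circ> inv p) d"
      unfolding PiE_fiber_permutes[OF p c] by simp
  qed
  also have "\<dots> = minor (Tfac sc \<beta> t) m c d"
    unfolding minor_def by (rule sum_permutations_inverse[symmetric])
  finally show ?thesis .
qed

lemma complex_alg_of_nat: "complex_alg sc \<Longrightarrow> sc (of_nat k) = of_nat k"
  by (induction k) (simp_all add: complex_alg_zero complex_alg_add complex_alg_one)

lemma Cst_neg_of_nat: "Cst (- of_nat k :: 'b::ring_1) = - of_nat k"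
proof -
  have "(of_nat k :: 'b fps fps) = Cst (of_nat k)" by (simp add: fps_of_nat)
  then show ?thesis by simp
qed

lemma OY_factor_shift: "OY_factor \<beta> c = OY_factor \<beta> 0 - Cst c * (fps_X * Yv)"
  unfolding OY_factor_def by (simp add: algebra_simps)

lemma complex_alg_add_self_eq_0:
  fixes sc :: "complex \<Rightarrow> 'a::ring_1" and x :: 'a
  assumes "complex_alg sc" and "x + x = 0"
  shows "x = 0"
proof -
  have "sc (1/2) * (x + x) = (sc (1/2) + sc (1/2)) * x"
    by (simp add: distrib_left distrib_right)
  also have "sc (1/2) + sc (1/2) = 1"
    using complex_alg_add[OF assms(1), of "1/2" "1/2"] complex_alg_one[OF assms(1)] by simp
  finally show ?thesis using assms(2) by simp
qed

lemma phi_inv_0: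
  assumes "\<beta> \<noteq> 0"
  shows "phi_inv \<beta> 0 = fps_X"
proof -
  have "phi_eq \<beta> 0 0" by (simp add: phi_eq_def)
  then have "phi_tail \<beta> 0 = 0" using phi_eq_unique[OF phi_tail_eq[OF assms]] by blast
  then show ?thesis by (simp add: phi_inv_def)
qed

lemma Tfac_eq_fps_subst:
  assumes "\<beta> \<noteq> 0" and "complex_alg sc" and "1 \<le> j"
  shows "Tfac sc \<beta> t j x y = fps_subst sc (phi_inv \<beta> (- of_nat (j - 1))) (Tser t x y)"
proof (cases "j = 1")
  case True
  then show ?thesis using assms by (simp add: Tfac_def phi_inv_0 fps_subst_by_X)
next
  case False
  then show ?thesis by (simp add: Tfac_def Tphi_def fps_subst_def Tser_nth)
qed

locale OY_algebra =
  fixes sc :: "complex \<Rightarrow> 'a::ring_1" and \<beta> :: complex and n :: nat and t :: "nat \<Rightarrow> nat \<Rightarrow> nat \<Rightarrow> 'a"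
  assumes complex_alg: "complex_alg sc" and OY: "OY_rel sc \<beta> n t" and \<beta>_nonzero: "\<beta> \<noteq> 0"
begin

text \<open>Generators with an index outside \<open>{1..n}\<close> are replaced by \<open>0\<close>, so that the relations
  required by \<open>minor_commutation\<close> hold for all indices.\<close>

definition Tu :: "nat \<Rightarrow> nat \<Rightarrow> 'a fps fps" where
  "Tu k l = (if k \<in> {1..n} \<and> l \<in> {1..n} then U (Tser t k l) else 0)"

definition Tv :: "nat \<Rightarrow> nat \<Rightarrow> nat \<Rightarrow> 'a fps fps" where
  "Tv j x y = (if x \<in> {1..n} \<and> y \<in> {1..n} then V (Tfac sc \<beta> t j x y) else 0)"

lemma cmap2_OY_factor_shift:
  "cmap2 sc (OY_factor \<beta> (- of_nat j)) = cmap2 sc (OY_factor \<beta> 0) + of_nat j * (fps_X * Yv)"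
proof -
  have "cmap2 sc (OY_factor \<beta> (- of_nat j)) = cmap2 sc (OY_factor \<beta> 0) - Cst (sc (- of_nat j)) * (fps_X * Yv)"
    unfolding OY_factor_shift[of \<beta> "- of_nat j"]
    by (simp add: cmap2_diff[OF complex_alg] cmap2_mult[OF complex_alg] cmap2_Cst[OF complex_alg]
        cmap2_X[OF complex_alg] cmap2_Yv[OF complex_alg] del: fps_const_mult fps_const_neg)
  also have "\<dots> = cmap2 sc (OY_factor \<beta> 0) + of_nat j * (fps_X * Yv)"
    by (simp add: complex_alg_uminus[OF complex_alg] complex_alg_of_nat[OF complex_alg] Cst_neg_of_nat
        del: fps_const_neg)
  finally show ?thesis .
qed

lemma Tu_Tv_relation:
  assumes "1 \<le> j"
  shows "(cmap2 sc (OY_factor \<beta> 0) + of_nat (j - 1) * (fps_X * Yv)) * (Tu k l * Tv j x y)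
           - fps_X * Yv * (Tu x l * Tv j k y)
       = (cmap2 sc (OY_factor \<beta> 0) + of_nat (j - 1) * (fps_X * Yv)) * (Tv j x y * Tu k l)
           - fps_X * Yv * (Tv j x l * Tu k y)"
proof (cases "k \<in> {1..n} \<and> l \<in> {1..n} \<and> x \<in> {1..n} \<and> y \<in> {1..n}")
  case True
  then have r: "k \<in> {1..n}" "l \<in> {1..n}" "x \<in> {1..n}" "y \<in> {1..n}" by auto
  have rearrange: "c * (A - B) = d * (C - D) \<Longrightarrow> c * A - d * C = c * B - d * D" for c d A B C D :: "'a fps fps"
    by (simp add: algebra_simps)
  have "cmap2 sc (OY_factor \<beta> (- of_nat (j - 1)))
      * (U (Tser t k l) * V (Tfac sc \<beta> t j x y) - V (Tfac sc \<beta> t j x y) * U (Tser t k l))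
      = fps_X * (Yv * (U (Tser t x l) * V (Tfac sc \<beta> t j k y) - V (Tfac sc \<beta> t j x l) * U (Tser t k y)))"
    using OY_rel_subst_v[OF complex_alg OY is_phi_inv_phi_inv[OF \<beta>_nonzero, of "- of_nat (j - 1)"] r]
    unfolding Tfac_eq_fps_subst[OF \<beta>_nonzero complex_alg assms, symmetric] .
  then have "(cmap2 sc (OY_factor \<beta> 0) + of_nat (j - 1) * (fps_X * Yv))
      * (U (Tser t k l) * V (Tfac sc \<beta> t j x y) - V (Tfac sc \<beta> t j x y) * U (Tser t k l))
      = fps_X * Yv * (U (Tser t x l) * V (Tfac sc \<beta> t j k y) - V (Tfac sc \<beta> t j x l) * U (Tser t k y))"
    by (simp only: cmap2_OY_factor_shift mult.assoc)
  from rearrange[OF this] show ?thesis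
    using r by (simp add: Tu_def Tv_def mult.assoc)
next
  case False
  then show ?thesis by (auto simp: Tu_def Tv_def)
qed

lemma Tv_exchange:
  assumes "1 \<le> j"
  shows "Tv j x y * Tv (Suc j) z w - Tv (Suc j) z w * Tv j x y
       = Tv j z y * Tv (Suc j) x w - Tv (Suc j) z y * Tv j x w"
proof (cases "x \<in> {1..n} \<and> y \<in> {1..n} \<and> z \<in> {1..n} \<and> w \<in> {1..n}")
  case True
  have "(- of_nat (j - 1) - 1 :: complex) = - of_nat (Suc j - 1)"
    using assms by (cases j) (simp_all add: algebra_simps)
  then have next_factor: "is_phi_inv \<beta> (- of_nat (j - 1) - 1) (phi_inv \<beta> (- of_nat (Suc j - 1)))"
    using is_phi_inv_phi_inv[OF \<beta>_nonzero, of "- of_nat (Suc j - 1)"] by simp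
  have "Tfac sc \<beta> t j x y * Tfac sc \<beta> t (Suc j) z w - Tfac sc \<beta> t (Suc j) z w * Tfac sc \<beta> t j x y
      = Tfac sc \<beta> t j z y * Tfac sc \<beta> t (Suc j) x w - Tfac sc \<beta> t (Suc j) z y * Tfac sc \<beta> t j x w"
    using OY_rel_fused[OF complex_alg OY is_phi_inv_phi_inv[OF \<beta>_nonzero] next_factor, of x y z w] True assms
    by (simp add: Tfac_eq_fps_subst[OF \<beta>_nonzero complex_alg])
  then have "V (Tfac sc \<beta> t j x y * Tfac sc \<beta> t (Suc j) z w - Tfac sc \<beta> t (Suc j) z w * Tfac sc \<beta> t j x y)
      = V (Tfac sc \<beta> t j z y * Tfac sc \<beta> t (Suc j) x w - Tfac sc \<beta> t (Suc j) z y * Tfac sc \<beta> t j x w)"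
    by (rule arg_cong)
  then show ?thesis
    using True unfolding Tv_def
    by (simp del: fps_const_mult fps_const_sub add: fps_const_mult[symmetric] fps_const_sub[symmetric])
next
  case False
  then show ?thesis by (auto simp: Tv_def)
qed

lemma minor_commutation_Tu_Tv: "minor_commutation (cmap2 sc (OY_factor \<beta> 0)) (fps_X * Yv) Tu Tv m"
proof unfold_locales
  show "central (cmap2 sc (OY_factor \<beta> 0))" by (rule central_cmap2[OF complex_alg])
  show "central (fps_X * Yv :: 'a fps fps)"
    using central_cmap2[OF complex_alg, of "fps_X * Yv"]
    by (simp add: cmap2_mult[OF complex_alg] cmap2_X[OF complex_alg] cmap2_Yv[OF complex_alg] del: fps_const_mult)
qed (rule Tu_Tv_relation)

lemma minor_Tv_swap:
  assumes "1 \<le> i" "i < i'" "i' \<le> m"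
  shows "minor Tv m a (b \<circ> \<tau> i i') = - minor Tv m a b"
proof -
  have two: "x + x = 0 \<Longrightarrow> x = 0" for x :: "'a fps fps"
    by (rule complex_alg_add_self_eq_0[OF complex_alg_fps_const[OF complex_alg_fps_const[OF complex_alg]]])
  show ?thesis
    using minor_swap[of m Tv, OF _ two assms] Tv_exchange by blast
qed

lemma OY_factor_shift_mult_eq_0D:
  "(cmap2 sc (OY_factor \<beta> 0) + of_nat j * (fps_X * Yv)) * x = 0 \<Longrightarrow> x = 0"
  unfolding cmap2_OY_factor_shift[symmetric] by (rule OY_factor_mult_eq_0D[OF complex_alg])

lemma minor_Tv_eq_qminor:
  assumes "\<forall>i\<in>{1..m}. c i \<in> {1..n}" and "\<forall>i\<in>{1..m}. d i \<in> {1..n}"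
  shows "minor Tv m c d = V (qminor sc \<beta> n t m c d)"
proof -
  have "minor Tv m c d = minor (\<lambda>j x y. V (Tfac sc \<beta> t j x y)) m c d"
    by (rule minor_cong_factor) (use assms in \<open>auto simp: Tv_def\<close>)
  also have "\<dots> = V (qminor sc \<beta> n t m c d)"
    by (simp only: minor_fps_const qminor_eq_minor[OF assms(1)])
  finally show ?thesis .
qed

lemma qminor_commutator_UV:
  assumes "1 \<le> m" and a: "\<forall>i\<in>{1..m}. a i \<in> {1..n}" and b: "\<forall>i\<in>{1..m}. b i \<in> {1..n}"
    and k: "k \<in> {1..n}" and l: "l \<in> {1..n}"
  shows "cmap2 sc (OY_factor \<beta> 0) * (U (Tser t k l) * V (qminor sc \<beta> n t m a b)
           - V (qminor sc \<beta> n t m a b) * U (Tser t k l))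
       = fps_X * Yv * ((\<Sum>i=1..m. U (Tser t (a i) l) * V (qminor sc \<beta> n t m (a(i := k)) b))
           - (\<Sum>i=1..m. V (qminor sc \<beta> n t m a (b(i := l))) * U (Tser t k (b i))))"
proof -
  interpret minor_commutation "cmap2 sc (OY_factor \<beta> 0)" "fps_X * Yv" Tu Tv m
    by (rule minor_commutation_Tu_Tv)
  have cancel: "\<forall>i x. 2 \<le> i \<longrightarrow> i \<le> m \<longrightarrow> e_shift i * x = 0 \<longrightarrow> x = 0"
    unfolding e_shift_def using OY_factor_shift_mult_eq_0D by blast
  have a': "\<forall>j\<in>{1..m}. (a(i := k)) j \<in> {1..n}" and b': "\<forall>j\<in>{1..m}. (b(i := l)) j \<in> {1..n}" for i
    using a b k l by auto
  have sum_rows: "(\<Sum>i=1..m. Tu (a i) l * minor Tv m (a(i := k)) b)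
      = (\<Sum>i=1..m. U (Tser t (a i) l) * V (qminor sc \<beta> n t m (a(i := k)) b))"
  proof (intro sum.cong refl)
    fix i assume "i \<in> {1..m}"
    then have "Tu (a i) l = U (Tser t (a i) l)" using a l by (simp add: Tu_def)
    then show "Tu (a i) l * minor Tv m (a(i := k)) b = U (Tser t (a i) l) * V (qminor sc \<beta> n t m (a(i := k)) b)"
      by (simp only: minor_Tv_eq_qminor[OF a' b])
  qed
  have sum_cols: "(\<Sum>i=1..m. minor Tv m a (b(i := l)) * Tu k (b i))
      = (\<Sum>i=1..m. V (qminor sc \<beta> n t m a (b(i := l))) * U (Tser t k (b i)))"
  proof (intro sum.cong refl)
    fix i assume "i \<in> {1..m}"
    then have "Tu k (b i) = U (Tser t k (b i))" using b k by (simp add: Tu_def)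
    then show "minor Tv m a (b(i := l)) * Tu k (b i) = V (qminor sc \<beta> n t m a (b(i := l))) * U (Tser t k (b i))"
      by (simp only: minor_Tv_eq_qminor[OF a b'])
  qed
  show ?thesis
    using minor_commutator[OF minor_Tv_swap cancel \<open>1 \<le> m\<close>, where k=k and l=l and a=a and b=b] k l
    unfolding sum_rows sum_cols by (simp add: minor_Tv_eq_qminor[OF a b] Tu_def)
qed

lemma qminor_commutator_series:
  assumes "1 \<le> m" and "\<forall>i\<in>{1..m}. a i \<in> {1..n}" and "\<forall>i\<in>{1..m}. b i \<in> {1..n}"
    and "k \<in> {1..n}" and "l \<in> {1..n}"
  shows "cmap2 sc (OY_factor \<beta> 0) * fps2 (\<lambda>p q. commutator (Tc t p k l) (qminor sc \<beta> n t m a b $ q))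
       = fps_X * (Yv * fps2 (\<lambda>p q. (\<Sum>i=1..m. Tc t p (a i) l * qminor sc \<beta> n t m (a(i := k)) b $ q)
                  - (\<Sum>i=1..m. qminor sc \<beta> n t m a (b(i := l)) $ q * Tc t p k (b i))))"
proof -
  have "fps2 (\<lambda>p q. commutator (Tc t p k l) (qminor sc \<beta> n t m a b $ q))
      = U (Tser t k l) * V (qminor sc \<beta> n t m a b) - V (qminor sc \<beta> n t m a b) * U (Tser t k l)"
    by (intro fps_ext) (simp add: commutator_def Tser_nth)
  moreover have "fps2 (\<lambda>p q. (\<Sum>i=1..m. Tc t p (a i) l * qminor sc \<beta> n t m (a(i := k)) b $ q)
                  - (\<Sum>i=1..m. qminor sc \<beta> n t m a (b(i := l)) $ q * Tc t p k (b i)))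
      = (\<Sum>i=1..m. U (Tser t (a i) l) * V (qminor sc \<beta> n t m (a(i := k)) b))
        - (\<Sum>i=1..m. V (qminor sc \<beta> n t m a (b(i := l))) * U (Tser t k (b i)))"
    by (intro fps_ext) (simp add: fps_sum_nth Tser_nth)
  ultimately show ?thesis
    using qminor_commutator_UV[OF assms] by (simp add: mult.assoc)
qed

end

theorem mainTheorem9:
  fixes sc :: "complex \<Rightarrow> 'a::ring_1" and \<beta> :: complex and n m k l :: nat
    and t :: "nat \<Rightarrow> nat \<Rightarrow> nat \<Rightarrow> 'a" and a b :: "nat \<Rightarrow> nat"
  assumes "complex_alg sc" and "OY_rel sc \<beta> n t"
    and "n \<ge> 1" and "\<beta> \<noteq> 0" and "1 \<le> m" and "m \<le> n"
    and "\<forall>i\<in>{1..m}. a i \<in> {1..n}" and "\<forall>i\<in>{1..m}. b i \<in> {1..n}"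
    and "k \<in> {1..n}" and "l \<in> {1..n}"
  shows "\<forall>r s :: int.
     factor_coeff sc \<beta> (\<lambda>p q. commutator (Tc t p k l) (fps_nth (qminor sc \<beta> n t m a b) q)) r s
     = zext (\<lambda>p q. (\<Sum>i=1..m. Tc t p (a i) l * fps_nth (qminor sc \<beta> n t m (a(i := k)) b) q)
                  - (\<Sum>i=1..m. fps_nth (qminor sc \<beta> n t m a (b(i := l))) q * Tc t p k (b i))) r s"
proof -
  interpret OY_algebra sc \<beta> n t
    using assms(1,2,4) by unfold_locales
  show ?thesis
    unfolding factor_coeff_eq_zext_iff[OF assms(1)]
    by (rule qminor_commutator_series[OF assms(5,7-10)])
qed

end
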